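(* Let $K$ be a field of any characteristic and let $I_A\subset K[x_1,\ldots,x_n]$ be a toric ideal of height $2$. Then $I_A$ is radical splittable if and only if $I_A$ is a set-theoretic complete intersection on binomials.
   Context: $A=\{{\bf a}_1,\ldots,{\bf a}_n\}\subset\mathbb{Z}^m$ with $\ker_{\mathbb{Z}}(A)\cap\mathbb{N}^n=\{{\bf 0}\}$; $I_A$ is the kernel of $K[x_1,\ldots,x_n]\to K[t_1^{\pm1},\ldots,t_m^{\pm1}]$, $x_i\mapsto{\bf t}^{{\bf a}_i}$. $\mathrm{bar}(I_A)$ is the smallest $t$ such that there exist binomials $B_1,\ldots,B_t\in I_A$ with $I_A=\mathrm{rad}(B_1,\ldots,B_t)$; $I_A$ is a set-theoretic complete intersection on binomials if $\mathrm{bar}(I_A)=\mathrm{ht}(I_A)$. $I_A$ is radical splittable if there exist toric ideals $I_{A_1},I_{A_2}\subset K[x_1,\ldots,x_n]$ with $I_A=\mathrm{rad}(I_{A_1}+I_{A_2})$ and $I_{A_i}\ne I_A$ for $i=1,2$. *)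

theory Defs
  imports Main "HOL-Library.Poly_Mapping" "HOL-Library.Extended_Nat"
begin

type_synonym 'k mpoly = "(nat \<Rightarrow>\<^sub>0 nat) \<Rightarrow>\<^sub>0 'k"

text \<open>The polynomial ring K[x_1,...,x_n] (variables indexed 0..n-1).\<close>
definition polyring :: "nat \<Rightarrow> 'k::field mpoly set" where
  "polyring n = {f. \<forall>u\<in>Poly_Mapping.keys f. Poly_Mapping.keys u \<subseteq> {..<n}}"

definition poly_ideal_gen :: "nat \<Rightarrow> 'k::field mpoly set \<Rightarrow> 'k mpoly set" where
  "poly_ideal_gen n S = {\<Sum>i<k. r i * s i | (k::nat) (r::nat \<Rightarrow> 'k mpoly) (s::nat \<Rightarrow> 'k mpoly).
      \<forall>i<k. r i \<in> polyring n \<and> s i \<in> S}"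

definition is_ideal :: "nat \<Rightarrow> 'k::field mpoly set \<Rightarrow> bool" where
  "is_ideal n I \<longleftrightarrow> I \<subseteq> polyring n \<and> 0 \<in> I \<and> (\<forall>f\<in>I. \<forall>g\<in>I. f + g \<in> I)
     \<and> (\<forall>f\<in>I. \<forall>r\<in>polyring n. r * f \<in> I)"

definition poly_rad :: "nat \<Rightarrow> 'k::field mpoly set \<Rightarrow> 'k mpoly set" where
  "poly_rad n I = {f \<in> polyring n. \<exists>k. f ^ k \<in> I}"

definition is_prime_ideal :: "nat \<Rightarrow> 'k::field mpoly set \<Rightarrow> bool" where
  "is_prime_ideal n P \<longleftrightarrow> is_ideal n P \<and> 1 \<notin> P \<and>
     (\<forall>f\<in>polyring n. \<forall>g\<in>polyring n. f * g \<in> P \<longrightarrow> f \<in> P \<or> g \<in> P)"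

definition prime_height :: "nat \<Rightarrow> 'k::field mpoly set \<Rightarrow> enat" where
  "prime_height n P = Sup {enat k | k. \<exists>C :: nat \<Rightarrow> 'k mpoly set.
      (\<forall>i\<le>k. is_prime_ideal n (C i)) \<and> (\<forall>i<k. C i \<subset> C (Suc i)) \<and> C k = P}"

definition ideal_height :: "nat \<Rightarrow> 'k::field mpoly set \<Rightarrow> enat" where
  "ideal_height n I = (INF P \<in> {P. is_prime_ideal n P \<and> I \<subseteq> P}. prime_height n P)"

definition is_binomial :: "'k::field mpoly \<Rightarrow> bool" where
  "is_binomial f \<longleftrightarrow> (\<exists>u v c d. f = Poly_Mapping.single u c + Poly_Mapping.single v d)"

text \<open>A = {a_1,...,a_n} \<subseteq> Z^m given by a_i = (A i 0, ..., A i (m-1)), i < n.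
  The A-degree of the monomial x^u is the vector sum_i u_i a_i in Z^m (as a function, 0 beyond m).\<close>
definition Adeg :: "nat \<Rightarrow> nat \<Rightarrow> (nat \<Rightarrow> nat \<Rightarrow> int) \<Rightarrow> (nat \<Rightarrow>\<^sub>0 nat) \<Rightarrow> nat \<Rightarrow> int" where
  "Adeg n m A u = (\<lambda>j. if j < m then (\<Sum>i<n. int (Poly_Mapping.lookup u i) * A i j) else 0)"

text \<open>Toric ideal: kernel of x_i \<mapsto> t^{a_i} into the Laurent polynomial ring
  (= group algebra of Z^m): f maps to zero iff for each b in Z^m the coefficients of
  the monomials of A-degree b sum to zero.\<close>
definition toric_ideal :: "'k::field itself \<Rightarrow> nat \<Rightarrow> nat \<Rightarrow> (nat \<Rightarrow> nat \<Rightarrow> int) \<Rightarrow> 'k mpoly set" where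
  "toric_ideal _ n m A = {f \<in> polyring n. \<forall>b. (\<Sum>u\<in>{u\<in>Poly_Mapping.keys f. Adeg n m A u = b}. Poly_Mapping.lookup f u) = 0}"

definition pointed_config :: "nat \<Rightarrow> nat \<Rightarrow> (nat \<Rightarrow> nat \<Rightarrow> int) \<Rightarrow> bool" where
  "pointed_config n m A \<longleftrightarrow> (\<forall>u. Poly_Mapping.keys u \<subseteq> {..<n} \<and> Adeg n m A u = (\<lambda>_. 0) \<longrightarrow> u = 0)"

definition bar :: "nat \<Rightarrow> 'k::field mpoly set \<Rightarrow> nat" where
  "bar n I = (LEAST t. \<exists>B :: nat \<Rightarrow> 'k mpoly. (\<forall>i<t. is_binomial (B i) \<and> B i \<in> I)
       \<and> I = poly_rad n (poly_ideal_gen n (B ` {..<t})))"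

definition stci_binomials :: "nat \<Rightarrow> 'k::field mpoly set \<Rightarrow> bool" where
  "stci_binomials n I \<longleftrightarrow> enat (bar n I) = ideal_height n I"

definition is_toric_ideal :: "nat \<Rightarrow> 'k::field mpoly set \<Rightarrow> bool" where
  "is_toric_ideal n J \<longleftrightarrow> (\<exists>m' A'. J = toric_ideal TYPE('k) n m' A')"

definition radical_splittable :: "nat \<Rightarrow> 'k::field mpoly set \<Rightarrow> bool" where
  "radical_splittable n I \<longleftrightarrow> (\<exists>I1 I2. is_toric_ideal n I1 \<and> is_toric_ideal n I2 \<and>
      I = poly_rad n (poly_ideal_gen n (I1 \<union> I2)) \<and> I1 \<noteq> I \<and> I2 \<noteq> I)"

end

theory Submission
  imports Defs "HOL-Library.Ramsey"
begin

text \<open>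
  The toric ideal \<open>I\<^sub>A\<close> is prime. A toric ideal of height at most one is either zero
  or generated by one binomial \<open>x\<^sup>a - x\<^sup>b\<close>: if all differences \<open>u - v\<close> of exponents of equal
  \<open>A\<close>-degree are parallel, the lattice \<open>ker\<^sub>\<int>(A)\<close> is cyclic, generated by \<open>a - b\<close>, and every
  binomial of the ideal is divisible by \<open>x\<^sup>a - x\<^sup>b\<close>; otherwise the toric ideal of the line through
  one such difference lies strictly between \<open>0\<close> and the ideal. Conversely, a nonzero binomial of
  \<open>I\<^sub>A\<close> with exponents \<open>u, v\<close> lies in the toric ideal of the line through \<open>u - v\<close>, which is a
  proper subideal when \<open>I\<^sub>A\<close> has height two, since a prime contained in a principal ideal has
  height at most one. Hence for height two: one binomial never suffices up to radical; the two
  summands of a radical splitting are principal binomial ideals, so \<open>bar(I\<^sub>A) = 2\<close>; and if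
  \<open>I\<^sub>A = rad(B\<^sub>1, B\<^sub>2)\<close>, the line toric ideals of \<open>B\<^sub>1\<close> and \<open>B\<^sub>2\<close> form a radical splitting.
  That \<open>bar(I\<^sub>A)\<close> is attained at all rests on a finite binomial generating set (Dickson's lemma).
\<close>

definition exponents :: "nat \<Rightarrow> (nat \<Rightarrow>\<^sub>0 nat) set" where
  "exponents n = {u. Poly_Mapping.keys u \<subseteq> {..<n}}"

definition monom :: "(nat \<Rightarrow>\<^sub>0 nat) \<Rightarrow> 'k::field mpoly" where
  "monom u = Poly_Mapping.single u 1"

definition binom :: "(nat \<Rightarrow>\<^sub>0 nat) \<Rightarrow> (nat \<Rightarrow>\<^sub>0 nat) \<Rightarrow> 'k::field mpoly" where
  "binom u v = monom u - monom v"

lemma binom_nonzero: "u \<noteq> v \<Longrightarrow> (binom u v :: 'k::field mpoly) \<noteq> 0"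
proof
  assume "u \<noteq> v" "(binom u v :: 'k mpoly) = 0"
  then have "Poly_Mapping.lookup (binom u v :: 'k mpoly) u = 0" by simp
  then show False using \<open>u \<noteq> v\<close> by (simp add: binom_def monom_def lookup_minus lookup_single_not_eq)
qed

lemma is_binomial_binom: "is_binomial (binom u v :: 'k::field mpoly)"
  unfolding is_binomial_def binom_def monom_def
  by (intro exI[of _ u] exI[of _ v] exI[of _ 1] exI[of _ "-1"]) (simp add: single_uminus)

lemma is_binomial_0: "is_binomial 0"
  unfolding is_binomial_def by (intro exI[of _ 0]) simp

lemma zero_in_exponents[simp]: "0 \<in> exponents n" by (simp add: exponents_def)

lemma polyring_0[simp]: "0 \<in> polyring n" by (simp add: polyring_def)
lemma polyring_1[simp]: "1 \<in> polyring n"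
  by (simp add: polyring_def flip: single_one)

lemma polyring_single: "u \<in> exponents n \<Longrightarrow> Poly_Mapping.single u c \<in> polyring n"
  by (simp add: polyring_def exponents_def)

lemma polyring_monom[simp]: "u \<in> exponents n \<Longrightarrow> monom u \<in> polyring n"
  by (simp add: monom_def polyring_single)

lemma polyring_add[simp]: "f \<in> polyring n \<Longrightarrow> g \<in> polyring n \<Longrightarrow> f + g \<in> polyring n"
  unfolding polyring_def using keys_add[of f g] by auto

lemma polyring_diff[simp]: "f \<in> polyring n \<Longrightarrow> g \<in> polyring n \<Longrightarrow> f - g \<in> polyring n"
  unfolding polyring_def using keys_diff[of f g] by auto

lemma polyring_uminus[simp]: "f \<in> polyring n \<Longrightarrow> - f \<in> polyring n"
  unfolding polyring_def by simp

lemma polyring_mult[simp]: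
  assumes f: "f \<in> polyring n" and g: "g \<in> polyring n"
  shows "f * g \<in> polyring n"
  unfolding polyring_def mem_Collect_eq
proof
  fix w assume "w \<in> Poly_Mapping.keys (f * g)"
  then obtain a b where w: "w = a + b" and "a \<in> Poly_Mapping.keys f" "b \<in> Poly_Mapping.keys g"
    using keys_mult[of f g] by auto
  then have "Poly_Mapping.keys a \<subseteq> {..<n}" "Poly_Mapping.keys b \<subseteq> {..<n}"
    using f g unfolding polyring_def by auto
  then show "Poly_Mapping.keys w \<subseteq> {..<n}" using keys_add[of a b] w by auto
qed

lemma polyring_power[simp]: "f \<in> polyring n \<Longrightarrow> f ^ k \<in> polyring n"
  by (induction k) auto

lemma polyring_sum[simp]: "(\<And>i. i \<in> S \<Longrightarrow> f i \<in> polyring n) \<Longrightarrow> sum f S \<in> polyring n"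
  by (induction S rule: infinite_finite_induct) auto

lemma polyring_binom[simp]: "u \<in> exponents n \<Longrightarrow> v \<in> exponents n \<Longrightarrow> binom u v \<in> polyring n"
  by (simp add: binom_def)

lemma monom_mult: "monom u * monom v = monom (u + v)"
  by (simp add: monom_def mult_single)

lemma keys_polyring: "f \<in> polyring n \<Longrightarrow> u \<in> Poly_Mapping.keys f \<Longrightarrow> u \<in> exponents n"
  by (auto simp: polyring_def exponents_def)

lemma sum_split_add: "(\<Sum>i<k1+k2. h i) = (\<Sum>i<k1. h i) + (\<Sum>i<k2. h (k1 + i))"
  for h :: "nat \<Rightarrow> 'a::comm_monoid_add"
  by (induction k2) (simp_all add: add.assoc)

lemma gen_sum_repr: "f \<in> poly_ideal_gen n S \<Longrightarrow> \<exists>(k::nat) r s. f = (\<Sum>i<k. r i * s i) \<and> (\<forall>i<k. r i \<in> polyring n \<and> s i \<in> S)"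
  unfolding poly_ideal_gen_def by simp

lemma gen_0[simp]: "0 \<in> poly_ideal_gen n S"
  unfolding poly_ideal_gen_def
  by (rule CollectI, rule exI[of _ 0]) auto

lemma gen_base: "s \<in> S \<Longrightarrow> s \<in> poly_ideal_gen n S"
  unfolding poly_ideal_gen_def
  by (rule CollectI, rule exI[of _ 1], rule exI[of _ "\<lambda>_. 1"], rule exI[of _ "\<lambda>_. s"]) auto

lemma gen_add:
  assumes "f \<in> poly_ideal_gen n S" "g \<in> poly_ideal_gen n S"
  shows "f + g \<in> poly_ideal_gen n S"
proof -
  obtain k1 :: nat and r1 s1 where 1: "f = (\<Sum>i<k1. r1 i * s1 i)" "\<forall>i<k1. r1 i \<in> polyring n \<and> s1 i \<in> S"
    using gen_sum_repr[OF assms(1)] by blast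
  obtain k2 :: nat and r2 s2 where 2: "g = (\<Sum>i<k2. r2 i * s2 i)" "\<forall>i<k2. r2 i \<in> polyring n \<and> s2 i \<in> S"
    using gen_sum_repr[OF assms(2)] by blast
  define r where "r i = (if i < k1 then r1 i else r2 (i - k1))" for i
  define s where "s i = (if i < k1 then s1 i else s2 (i - k1))" for i
  have "(\<Sum>i<k1+k2. r i * s i) = f + g"
    unfolding sum_split_add 1 2 r_def s_def by simp
  moreover have "\<forall>i<k1+k2. r i \<in> polyring n \<and> s i \<in> S"
    using 1(2) 2(2) unfolding r_def s_def by auto
  ultimately show ?thesis unfolding poly_ideal_gen_def
    by (intro CollectI exI[of _ "k1+k2"] exI[of _ r] exI[of _ s]) auto
qed

lemma gen_mult:
  assumes "f \<in> poly_ideal_gen n S" "q \<in> polyring n"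
  shows "q * f \<in> poly_ideal_gen n S"
proof -
  obtain k :: nat and r s where 1: "f = (\<Sum>i<k. r i * s i)" "\<forall>i<k. r i \<in> polyring n \<and> s i \<in> S"
    using gen_sum_repr[OF assms(1)] by blast
  have "q * f = (\<Sum>i<k. (q * r i) * s i)"
    unfolding 1 by (simp add: sum_distrib_left mult.assoc)
  moreover have "\<forall>i<k. q * r i \<in> polyring n \<and> s i \<in> S" using 1(2) assms(2) by auto
  ultimately show ?thesis unfolding poly_ideal_gen_def by (auto intro!: exI[of _ k])
qed

lemma gen_subset_polyring: "S \<subseteq> polyring n \<Longrightarrow> poly_ideal_gen n S \<subseteq> polyring n"
  unfolding poly_ideal_gen_def by (auto intro!: polyring_sum)

lemma gen_ideal: "S \<subseteq> polyring n \<Longrightarrow> is_ideal n (poly_ideal_gen n S)"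
  unfolding is_ideal_def using gen_subset_polyring[of S n]
  by (auto intro: gen_add gen_mult)

lemma ideal_sum: "is_ideal n J \<Longrightarrow> (\<And>i. i \<in> I \<Longrightarrow> f i \<in> J) \<Longrightarrow> sum f I \<in> J"
  by (induction I rule: infinite_finite_induct) (auto simp: is_ideal_def)

lemma ideal_mult_mem: "is_ideal n I \<Longrightarrow> r \<in> polyring n \<Longrightarrow> f \<in> I \<Longrightarrow> r * f \<in> I"
  by (simp add: is_ideal_def)

lemma gen_least: "is_ideal n J \<Longrightarrow> S \<subseteq> J \<Longrightarrow> poly_ideal_gen n S \<subseteq> J"
  unfolding poly_ideal_gen_def
  by (auto intro!: ideal_sum simp: is_ideal_def subset_iff)

lemma gen_mono: "S \<subseteq> S' \<Longrightarrow> poly_ideal_gen n S \<subseteq> poly_ideal_gen n S'"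
  unfolding poly_ideal_gen_def by blast

lemma gen_sub_gen: "S \<subseteq> poly_ideal_gen n S' \<Longrightarrow> S' \<subseteq> polyring n \<Longrightarrow> poly_ideal_gen n S \<subseteq> poly_ideal_gen n S'"
  using gen_least gen_ideal by blast

lemma gen_singleton_mult: "f \<in> poly_ideal_gen n {p} \<Longrightarrow> \<exists>q\<in>polyring n. f = q * p"
  unfolding poly_ideal_gen_def
  by (auto simp: sum_distrib_right[symmetric] intro!: polyring_sum)

lemma gen_subset_zero: "S \<subseteq> {0} \<Longrightarrow> poly_ideal_gen n S \<subseteq> {0}"
  unfolding poly_ideal_gen_def by (auto simp: subset_iff intro!: sum.neutral)

lemma mult_in_gen_singleton: "q \<in> polyring n \<Longrightarrow> q * p \<in> poly_ideal_gen n {p}"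
  by (rule gen_mult) (auto intro: gen_base)

lemma rad_mono: "J \<subseteq> J' \<Longrightarrow> poly_rad n J \<subseteq> poly_rad n J'"
  unfolding poly_rad_def by blast

lemma subset_rad: "J \<subseteq> polyring n \<Longrightarrow> J \<subseteq> poly_rad n J"
  unfolding poly_rad_def by (auto intro: exI[of _ 1])

lemma subset_rad_gen: "S \<subseteq> polyring n \<Longrightarrow> S \<subseteq> poly_rad n (poly_ideal_gen n S)"
  using subset_rad[OF gen_subset_polyring] gen_base by blast

lemma prime_ideal_power_mem:
  assumes P: "is_prime_ideal n P" and f: "f \<in> polyring n" and "f ^ k \<in> P"
  shows "f \<in> P"
  using assms(3)
proof (induction k)
  case 0 then show ?case using P by (simp add: is_prime_ideal_def)
next
  case (Suc k)
  then have "f * f ^ k \<in> P" by simp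
  then have "f \<in> P \<or> f ^ k \<in> P" using P f unfolding is_prime_ideal_def by auto
  then show ?case using Suc.IH by auto
qed

lemma rad_subset_prime: "is_prime_ideal n P \<Longrightarrow> J \<subseteq> P \<Longrightarrow> poly_rad n J \<subseteq> P"
  unfolding poly_rad_def using prime_ideal_power_mem by blast

lemma rad_subset_zero: "J \<subseteq> {0} \<Longrightarrow> poly_rad n J \<subseteq> {(0::'k::field mpoly)}"
  unfolding poly_rad_def by auto

lemma zero_in_prime_ideal: "is_prime_ideal n P \<Longrightarrow> 0 \<in> P"
  by (simp add: is_prime_ideal_def is_ideal_def)

lemma is_prime_ideal_zero: "is_prime_ideal n {0::'k::field mpoly}"
  unfolding is_prime_ideal_def is_ideal_def by auto

definition monom_deg :: "(nat \<Rightarrow>\<^sub>0 nat) \<Rightarrow> nat" where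
  "monom_deg u = (\<Sum>i\<in>Poly_Mapping.keys u. Poly_Mapping.lookup u i)"

lemma monom_deg_add: "monom_deg (u + v) = monom_deg u + monom_deg v"
  unfolding monom_deg_def by (rule setsum_keys_plus_distrib) auto

lemma monom_deg_eq_0_iff: "monom_deg u = 0 \<longleftrightarrow> u = 0"
proof
  assume "monom_deg u = 0"
  then have "\<forall>i\<in>Poly_Mapping.keys u. Poly_Mapping.lookup u i = 0" unfolding monom_deg_def by simp
  then have "\<forall>i. Poly_Mapping.lookup u i = 0" by (metis in_keys_iff)
  then show "u = 0" by (intro poly_mapping_eqI) simp
qed (simp add: monom_deg_def)

definition total_deg :: "'k::field mpoly \<Rightarrow> nat" where
  "total_deg f = Max (insert 0 (monom_deg ` Poly_Mapping.keys f))"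

lemma monom_deg_le_total_deg: "u \<in> Poly_Mapping.keys f \<Longrightarrow> monom_deg u \<le> total_deg f"
  unfolding total_deg_def by (rule Max_ge) auto

lemma total_deg_attained:
  assumes "f \<noteq> 0"
  shows "\<exists>u\<in>Poly_Mapping.keys f. monom_deg u = total_deg f"
proof -
  obtain u0 where u0: "u0 \<in> Poly_Mapping.keys f" using assms by (metis keys_eq_empty ex_in_conv)
  have "total_deg f \<in> insert 0 (monom_deg ` Poly_Mapping.keys f)" unfolding total_deg_def by (rule Max_in) auto
  then show ?thesis
  proof
    assume "total_deg f = 0"
    then show ?thesis using monom_deg_le_total_deg[OF u0] u0 by (intro bexI[of _ u0]) auto
  next
    assume "total_deg f \<in> monom_deg ` Poly_Mapping.keys f"
    then show ?thesis by auto
  qed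
qed

definition top_part :: "'k::field mpoly \<Rightarrow> 'k mpoly" where
  "top_part f = Abs_poly_mapping (\<lambda>u. if monom_deg u = total_deg f then Poly_Mapping.lookup f u else 0)"

lemma lookup_top_part: "Poly_Mapping.lookup (top_part f) u = (if monom_deg u = total_deg f then Poly_Mapping.lookup f u else 0)"
proof -
  have "finite {u. (if monom_deg u = total_deg f then Poly_Mapping.lookup f u else 0) \<noteq> 0}"
    by (rule finite_subset[of _ "Poly_Mapping.keys f"]) (auto simp: in_keys_iff)
  then show ?thesis unfolding top_part_def by simp
qed

lemma keys_top_part: "u \<in> Poly_Mapping.keys (top_part f) \<Longrightarrow> monom_deg u = total_deg f"
  by (auto simp: in_keys_iff lookup_top_part split: if_splits)

lemma keys_diff_top_part: "u \<in> Poly_Mapping.keys (f - top_part f) \<Longrightarrow> monom_deg u < total_deg f"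
proof -
  assume u: "u \<in> Poly_Mapping.keys (f - top_part f)"
  then have "monom_deg u \<noteq> total_deg f" by (auto simp: in_keys_iff lookup_minus lookup_top_part)
  moreover have "u \<in> Poly_Mapping.keys f" using u by (auto simp: in_keys_iff lookup_minus lookup_top_part split: if_splits)
  ultimately show ?thesis using monom_deg_le_total_deg by (meson le_neq_implies_less)
qed

lemma top_part_nonzero: "f \<noteq> 0 \<Longrightarrow> top_part f \<noteq> 0"
proof -
  assume "f \<noteq> 0"
  then obtain u where "u \<in> Poly_Mapping.keys f" "monom_deg u = total_deg f" using total_deg_attained by blast
  then have "Poly_Mapping.lookup (top_part f) u \<noteq> 0" by (simp add: lookup_top_part in_keys_iff)
  then show ?thesis by auto
qed

lemma keys_mult_monom_deg_less:
  assumes "w \<in> Poly_Mapping.keys (p * q)" "\<And>a. a \<in> Poly_Mapping.keys p \<Longrightarrow> monom_deg a \<le> s" "\<And>b. b \<in> Poly_Mapping.keys q \<Longrightarrow> monom_deg b < t"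
  shows "monom_deg w < s + t"
proof -
  obtain a b where "w = a + b" "a \<in> Poly_Mapping.keys p" "b \<in> Poly_Mapping.keys q"
    using keys_mult[of p q] assms(1) by auto
  then show ?thesis using assms(2,3) by (simp add: monom_deg_add add_le_less_mono)
qed

lemma total_deg_mult:
  fixes f g :: "'k::field mpoly"
  assumes f: "f \<noteq> 0" and g: "g \<noteq> 0"
  shows "total_deg f + total_deg g \<le> total_deg (f * g)"
proof -
  define tf where "tf = top_part f"
  define tg where "tg = top_part g"
  define rf where "rf = f - tf"
  define rg where "rg = g - tg"
  have tfk: "\<And>a. a \<in> Poly_Mapping.keys tf \<Longrightarrow> monom_deg a = total_deg f" unfolding tf_def by (rule keys_top_part)
  have tgk: "\<And>a. a \<in> Poly_Mapping.keys tg \<Longrightarrow> monom_deg a = total_deg g" unfolding tg_def by (rule keys_top_part)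
  have rfk: "\<And>a. a \<in> Poly_Mapping.keys rf \<Longrightarrow> monom_deg a < total_deg f" unfolding rf_def tf_def by (rule keys_diff_top_part)
  have rgk: "\<And>a. a \<in> Poly_Mapping.keys rg \<Longrightarrow> monom_deg a < total_deg g" unfolding rg_def tg_def by (rule keys_diff_top_part)
  have "tf * tg \<noteq> 0" unfolding tf_def tg_def using top_part_nonzero[OF f] top_part_nonzero[OF g] by simp
  then obtain w where w: "w \<in> Poly_Mapping.keys (tf * tg)" by (metis keys_eq_empty ex_in_conv)
  obtain a b where ab: "w = a + b" "a \<in> Poly_Mapping.keys tf" "b \<in> Poly_Mapping.keys tg"
    using keys_mult[of tf tg] w by auto
  have dw: "monom_deg w = total_deg f + total_deg g" using ab tfk tgk by (simp add: monom_deg_add)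
  have fg: "f * g = tf * tg + (tf * rg + (rf * tg + rf * rg))"
    unfolding rf_def rg_def by (simp add: algebra_simps)
  have n1: "w \<notin> Poly_Mapping.keys (tf * rg)"
  proof
    assume "w \<in> Poly_Mapping.keys (tf * rg)"
    then have "monom_deg w < total_deg f + total_deg g" by (rule keys_mult_monom_deg_less) (auto dest: tfk rgk)
    then show False using dw by simp
  qed
  have n2: "w \<notin> Poly_Mapping.keys (rf * tg)"
  proof
    assume "w \<in> Poly_Mapping.keys (rf * tg)"
    then have "w \<in> Poly_Mapping.keys (tg * rf)" by (simp add: mult.commute)
    then have "monom_deg w < total_deg g + total_deg f" by (rule keys_mult_monom_deg_less) (auto dest: tgk rfk)
    then show False using dw by simp
  qed
  have n3: "w \<notin> Poly_Mapping.keys (rf * rg)"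
  proof
    assume "w \<in> Poly_Mapping.keys (rf * rg)"
    then have "monom_deg w < total_deg f + total_deg g" by (rule keys_mult_monom_deg_less) (auto dest: rfk rgk less_imp_le)
    then show False using dw by simp
  qed
  have "Poly_Mapping.lookup (f * g) w = Poly_Mapping.lookup (tf * tg) w"
    unfolding fg using n1 n2 n3 by (simp add: lookup_add in_keys_iff)
  then have "w \<in> Poly_Mapping.keys (f * g)" using w by (simp add: in_keys_iff)
  then show ?thesis using monom_deg_le_total_deg dw by metis
qed

lemma total_deg_power_mult:
  fixes p g :: "'k::field mpoly"
  assumes "p \<noteq> 0" "g \<noteq> 0"
  shows "k * total_deg p \<le> total_deg (p ^ k * g)"
proof (induction k)
  case 0 then show ?case by simp
next
  case (Suc k)
  have "p ^ k * g \<noteq> 0" using assms by simp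
  then have "total_deg p + total_deg (p ^ k * g) \<le> total_deg (p * (p ^ k * g))" using total_deg_mult assms(1) by blast
  then show ?case using Suc.IH by (simp add: mult.assoc)
qed

lemma total_deg_binom_ge_1:
  assumes "a \<noteq> b"
  shows "1 \<le> total_deg (binom a b :: 'k::field mpoly)"
proof -
  have ka: "a \<in> Poly_Mapping.keys (binom a b :: 'k mpoly)"
    using assms by (simp add: in_keys_iff binom_def monom_def lookup_minus lookup_single)
  have kb: "b \<in> Poly_Mapping.keys (binom a b :: 'k mpoly)"
    using assms by (simp add: in_keys_iff binom_def monom_def lookup_minus lookup_single when_def)
  have "a \<noteq> 0 \<or> b \<noteq> 0" using assms by auto
  then have "monom_deg a \<ge> 1 \<or> monom_deg b \<ge> 1" using monom_deg_eq_0_iff by (metis less_one not_less)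
  then show ?thesis using monom_deg_le_total_deg[OF ka] monom_deg_le_total_deg[OF kb] by linarith
qed

section \<open>Heights of prime ideals\<close>

lemma chain_le_prime_height:
  assumes "\<forall>i\<le>k. is_prime_ideal n (C i)" "\<forall>i<k. C i \<subset> C (Suc i)" "C k = P"
  shows "enat k \<le> prime_height n P"
  unfolding prime_height_def
  by (rule Sup_upper) (use assms in blast)

lemma chain_extend_le_prime_height:
  assumes P: "is_prime_ideal n P" and JP: "J \<subset> P"
    and C: "\<forall>i\<le>k. is_prime_ideal n (C i)" "\<forall>i<k. C i \<subset> C (Suc i)" "C k = J"
  shows "enat (Suc k) \<le> prime_height n P"
proof (rule chain_le_prime_height)
  show "\<forall>i\<le>Suc k. is_prime_ideal n ((C(Suc k := P)) i)"
    using C(1) P by (auto simp: le_Suc_eq)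
  show "\<forall>i<Suc k. (C(Suc k := P)) i \<subset> (C(Suc k := P)) (Suc i)"
    using C(2,3) JP by (auto simp: less_Suc_eq)
qed simp

lemma prime_chain_2_le_prime_height:
  assumes "is_prime_ideal n P0" "is_prime_ideal n P1" "is_prime_ideal n P2" "P0 \<subset> P1" "P1 \<subset> P2"
  shows "2 \<le> prime_height n P2"
proof -
  define C where "C i = (if i = 0 then P0 else if i = 1 then P1 else P2)" for i :: nat
  have "enat 2 \<le> prime_height n P2"
    by (rule chain_le_prime_height[of 2 n C]) (use assms in \<open>auto simp: C_def less_2_cases_iff le_Suc_eq numeral_2_eq_2\<close>)
  then show ?thesis by (simp add: numeral_eq_enat)
qed

lemma prime_height_mono:
  assumes Q: "is_prime_ideal n Q" and PQ: "P \<subseteq> Q"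
  shows "prime_height n P \<le> prime_height n Q"
  unfolding prime_height_def[of n P]
proof (rule Sup_least)
  fix x assume "x \<in> {enat k |k. \<exists>C. (\<forall>i\<le>k. is_prime_ideal n (C i)) \<and> (\<forall>i<k. C i \<subset> C (Suc i)) \<and> C k = P}"
  then obtain k C where x: "x = enat k" and C: "\<forall>i\<le>k. is_prime_ideal n (C i)" "\<forall>i<k. C i \<subset> C (Suc i)" "C k = P"
    by blast
  show "x \<le> prime_height n Q"
  proof (cases "P = Q")
    case True then show ?thesis using chain_le_prime_height[OF C] x by simp
  next
    case False
    then have "enat (Suc k) \<le> prime_height n Q" using chain_extend_le_prime_height[OF Q _ C] PQ by blast
    then show ?thesis using x by (meson order_trans enat_ord_simps(1) le_SucI order_refl)
  qed
qed

lemma ideal_height_prime: "is_prime_ideal n P \<Longrightarrow> ideal_height n P = prime_height n P"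
  unfolding ideal_height_def
  by (rule antisym) (auto intro!: INF_lower INF_greatest prime_height_mono)

lemma prime_height_le_if_psubset:
  assumes P: "is_prime_ideal n P" and JP: "J \<subset> P" and h: "prime_height n P \<le> enat (Suc k)"
  shows "prime_height n J \<le> enat k"
  unfolding prime_height_def[of n J]
proof (rule Sup_least)
  fix x assume "x \<in> {enat j |j. \<exists>C. (\<forall>i\<le>j. is_prime_ideal n (C i)) \<and> (\<forall>i<j. C i \<subset> C (Suc i)) \<and> C j = J}"
  then obtain j C where x: "x = enat j" and C: "\<forall>i\<le>j. is_prime_ideal n (C i)" "\<forall>i<j. C i \<subset> C (Suc i)" "C j = J"
    by blast
  have "enat (Suc j) \<le> enat (Suc k)" using chain_extend_le_prime_height[OF P JP C] h by (rule order_trans)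
  then show "x \<le> enat k" using x by simp
qed

lemma prime_height_zero: "prime_height n {0 :: 'k::field mpoly} = 0"
proof -
  have "k = 0" if C: "\<forall>i\<le>k. is_prime_ideal n (C i)" "\<forall>i<k. C i \<subset> C (Suc i)" "C k = {0}"
    for k and C :: "nat \<Rightarrow> 'k mpoly set"
  proof (rule ccontr)
    assume "k \<noteq> 0"
    then have "C (k - 1) \<subset> {0}" "0 \<in> C (k - 1)"
      using C zero_in_prime_ideal[of n "C (k - 1)"] by (auto dest: spec[of _ "k - 1"])
    then show False by blast
  qed
  then have "prime_height n {0 :: 'k mpoly} \<le> 0"
    unfolding prime_height_def by (intro Sup_least) (auto simp: zero_enat_def)
  then show ?thesis by simp
qed

lemma no_prime_chain_below_principal:
  assumes Q0: "is_prime_ideal n Q0" and Q1: "is_prime_ideal n Q1"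
    and Q01: "Q0 \<subset> Q1" and Q1P: "Q1 \<subset> P"
    and Pp: "P \<subseteq> poly_ideal_gen n {p}" and p: "p \<in> polyring n" and tp: "1 \<le> total_deg (p :: 'k::field mpoly)"
  shows False
proof -
  obtain f where f: "f \<in> Q1" "f \<notin> Q0" using Q01 by blast
  have f0: "f \<noteq> 0" using f zero_in_prime_ideal[OF Q0] by auto
  have pQ1: "p \<notin> Q1"
  proof
    assume "p \<in> Q1"
    then have "poly_ideal_gen n {p} \<subseteq> Q1"
      using Q1 gen_least[of n Q1 "{p}"] by (simp add: is_prime_ideal_def)
    then show False using Pp Q1P by blast
  qed
  \<comment> \<open>As \<open>p \<notin> Q1\<close> and \<open>Q1 \<subseteq> (p)\<close>, the element \<open>f\<close> is divisible by every power of \<open>p\<close>;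
    its total degree forbids this.\<close>
  have ex: "\<exists>g\<in>Q1. f = p ^ k * g" for k
  proof (induction k)
    case 0 then show ?case using f by auto
  next
    case (Suc k)
    then obtain g where g: "g \<in> Q1" "f = p ^ k * g" by blast
    have "g \<in> poly_ideal_gen n {p}" using g Q1P Pp by blast
    then obtain q where q: "q \<in> polyring n" "g = q * p" using gen_singleton_mult by blast
    have "p * q \<in> Q1" using g q by (simp add: mult.commute)
    then have "q \<in> Q1" using Q1 pQ1 p q unfolding is_prime_ideal_def by blast
    moreover have "f = p ^ Suc k * q" using g q by (simp add: mult_ac)
    ultimately show ?case by blast
  qed
  obtain g where g: "g \<in> Q1" "f = p ^ Suc (total_deg f) * g" using ex by blast
  have p0: "p \<noteq> 0" using tp by (auto simp: total_deg_def)
  have g0: "g \<noteq> 0" using g f0 by auto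
  have "Suc (total_deg f) * total_deg p \<le> total_deg f" using total_deg_power_mult[OF p0 g0, of "Suc (total_deg f)"] g by simp
  moreover have "Suc (total_deg f) \<le> Suc (total_deg f) * total_deg p" using mult_le_mono2[OF tp, of "Suc (total_deg f)"] by simp
  ultimately show False by linarith
qed

lemma prime_height_le_1_if_subset_principal:
  assumes P: "P \<subseteq> poly_ideal_gen n {p}" and p: "p \<in> polyring n" and tp: "1 \<le> total_deg (p :: 'k::field mpoly)"
  shows "prime_height n P \<le> 1"
  unfolding prime_height_def
proof (rule Sup_least)
  fix x assume "x \<in> {enat k |k. \<exists>C. (\<forall>i\<le>k. is_prime_ideal n (C i)) \<and> (\<forall>i<k. C i \<subset> C (Suc i)) \<and> C k = P}"
  then obtain k C where x: "x = enat k" and C: "\<forall>i\<le>k. is_prime_ideal n (C i)" "\<forall>i<k. C i \<subset> C (Suc i)" "C k = P"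
    by blast
  show "x \<le> 1"
  proof (rule ccontr)
    assume "\<not> x \<le> 1"
    then have k: "Suc (Suc (k - 2)) = k" using x by (simp add: one_enat_def)
    have "C (k - 2) \<subset> C (Suc (k - 2))" "C (Suc (k - 2)) \<subset> C k"
      using C(2)[rule_format, of "k - 2"] C(2)[rule_format, of "Suc (k - 2)"] k by simp_all
    moreover have "is_prime_ideal n (C (k - 2))" "is_prime_ideal n (C (Suc (k - 2)))"
      using C(1) k by simp_all
    ultimately show False using no_prime_chain_below_principal[OF _ _ _ _ P p tp] C(3) by blast
  qed
qed

definition push_keys :: "('a \<Rightarrow> 'b) \<Rightarrow> ('a \<Rightarrow>\<^sub>0 'c::comm_ring_1) \<Rightarrow> ('b \<Rightarrow>\<^sub>0 'c)" where
  "push_keys h f = (\<Sum>u\<in>Poly_Mapping.keys f. Poly_Mapping.single (h u) (Poly_Mapping.lookup f u))"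

lemma poly_mapping_sum_single: "f = (\<Sum>u\<in>Poly_Mapping.keys f. Poly_Mapping.single u (Poly_Mapping.lookup f u))"
proof (rule poly_mapping_eqI)
  fix k
  have "Poly_Mapping.lookup (\<Sum>u\<in>Poly_Mapping.keys f. Poly_Mapping.single u (Poly_Mapping.lookup f u)) k
      = (\<Sum>u\<in>Poly_Mapping.keys f. (if u = k then Poly_Mapping.lookup f u else 0))"
    by (simp add: lookup_sum lookup_single when_def)
  also have "\<dots> = Poly_Mapping.lookup f k"
    by (simp add: sum.delta in_keys_iff)
  finally show "Poly_Mapping.lookup f k = Poly_Mapping.lookup (\<Sum>u\<in>Poly_Mapping.keys f. Poly_Mapping.single u (Poly_Mapping.lookup f u)) k" by simp
qed

lemma push_keys_add: "push_keys h (f + g) = push_keys h f + push_keys h g"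
  unfolding push_keys_def
  by (rule setsum_keys_plus_distrib) (auto simp: single_add)

lemma push_keys_0[simp]: "push_keys h 0 = 0" by (simp add: push_keys_def)

lemma push_keys_sum: "push_keys h (sum f S) = (\<Sum>i\<in>S. push_keys h (f i))"
  by (induction S rule: infinite_finite_induct) (auto simp: push_keys_add)

lemma push_keys_single[simp]: "push_keys h (Poly_Mapping.single u c) = Poly_Mapping.single (h u) c"
  by (cases "c = 0") (auto simp: push_keys_def)

lemma push_keys_uminus: "push_keys h (- f) = - push_keys h f"
  using push_keys_add[of h f "-f"] by (simp add: eq_neg_iff_add_eq_0 add.commute)

lemma push_keys_diff: "push_keys h (f - g) = push_keys h f - push_keys h g"
  using push_keys_add[of h f "-g"] push_keys_uminus[of h g] by simp

lemma lookup_push_keys: "Poly_Mapping.lookup (push_keys h f) b =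
   (\<Sum>u\<in>{u\<in>Poly_Mapping.keys f. h u = b}. Poly_Mapping.lookup f u)"
proof -
  have "Poly_Mapping.lookup (push_keys h f) b = (\<Sum>u\<in>Poly_Mapping.keys f. (if h u = b then Poly_Mapping.lookup f u else 0))"
    by (simp add: push_keys_def lookup_sum lookup_single when_def)
  also have "\<dots> = (\<Sum>u\<in>{u\<in>Poly_Mapping.keys f. h u = b}. Poly_Mapping.lookup f u)"
    by (simp add: sum.inter_filter)
  finally show ?thesis .
qed

lemma push_keys_mult:
  fixes h :: "'a::comm_monoid_add \<Rightarrow> 'b::comm_monoid_add"
  assumes hadd: "\<And>a b. h (a + b) = h a + h b"
  shows "push_keys h (f * g) = push_keys h f * (push_keys h g :: 'b \<Rightarrow>\<^sub>0 'c::comm_ring_1)"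
proof -
  let ?F = "Poly_Mapping.keys f" and ?G = "Poly_Mapping.keys g"
  have "f * g = (\<Sum>u\<in>?F. Poly_Mapping.single u (Poly_Mapping.lookup f u)) * (\<Sum>v\<in>?G. Poly_Mapping.single v (Poly_Mapping.lookup g v))"
    using poly_mapping_sum_single[of f] poly_mapping_sum_single[of g] by simp
  also have "\<dots> = (\<Sum>u\<in>?F. \<Sum>v\<in>?G. Poly_Mapping.single (u + v) (Poly_Mapping.lookup f u * Poly_Mapping.lookup g v))"
    by (simp add: sum_product mult_single)
  finally have fg: "f * g = \<dots>" .
  have "push_keys h f * push_keys h g = (\<Sum>u\<in>?F. Poly_Mapping.single (h u) (Poly_Mapping.lookup f u)) * (\<Sum>v\<in>?G. Poly_Mapping.single (h v) (Poly_Mapping.lookup g v))"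
    by (simp add: push_keys_def)
  also have "\<dots> = (\<Sum>u\<in>?F. \<Sum>v\<in>?G. Poly_Mapping.single (h u + h v) (Poly_Mapping.lookup f u * Poly_Mapping.lookup g v))"
    by (simp add: sum_product mult_single)
  finally show ?thesis using fg by (simp add: push_keys_sum hadd)
qed

section \<open>Toric ideals as kernels\<close>

lemma finite_Adeg_support: "finite {j. Adeg n m A u j \<noteq> 0}"
  by (rule finite_subset[of _ "{..<m}"]) (auto simp: Adeg_def)

definition Adeg_pm :: "nat \<Rightarrow> nat \<Rightarrow> (nat \<Rightarrow> nat \<Rightarrow> int) \<Rightarrow> (nat \<Rightarrow>\<^sub>0 nat) \<Rightarrow> (nat \<Rightarrow>\<^sub>0 int)" where
  "Adeg_pm n m A u = Abs_poly_mapping (Adeg n m A u)"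

lemma lookup_Adeg_pm: "Poly_Mapping.lookup (Adeg_pm n m A u) = Adeg n m A u"
  unfolding Adeg_pm_def using finite_Adeg_support[of n m A u] by simp

lemma Adeg_pm_eq_iff: "Adeg_pm n m A u = b \<longleftrightarrow> Adeg n m A u = Poly_Mapping.lookup b"
  by (metis lookup_Adeg_pm poly_mapping_eq_iff)

lemma Adeg_pm_eq_Adeg_pm: "Adeg_pm n m A u = Adeg_pm n m A v \<longleftrightarrow> Adeg n m A u = Adeg n m A v"
  by (simp add: Adeg_pm_eq_iff lookup_Adeg_pm)

lemma Adeg_add: "Adeg n m A (u + v) = (\<lambda>j. Adeg n m A u j + Adeg n m A v j)"
  by (auto simp: Adeg_def lookup_add sum.distrib distrib_right fun_eq_iff)

lemma Adeg_pm_add: "Adeg_pm n m A (u + v) = Adeg_pm n m A u + Adeg_pm n m A v"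
  by (rule poly_mapping_eqI) (simp add: lookup_add lookup_Adeg_pm Adeg_add)

definition toric_hom :: "nat \<Rightarrow> nat \<Rightarrow> (nat \<Rightarrow> nat \<Rightarrow> int) \<Rightarrow> 'k::field mpoly \<Rightarrow> ((nat \<Rightarrow>\<^sub>0 int) \<Rightarrow>\<^sub>0 'k)" where
  "toric_hom n m A f = push_keys (Adeg_pm n m A) f"

lemma toric_hom_mult: "toric_hom n m A (f * g) = toric_hom n m A f * toric_hom n m A g"
  unfolding toric_hom_def by (rule push_keys_mult) (rule Adeg_pm_add)

lemma toric_hom_add: "toric_hom n m A (f + g) = toric_hom n m A f + toric_hom n m A g"
  unfolding toric_hom_def by (rule push_keys_add)

lemma toric_hom_diff: "toric_hom n m A (f - g) = toric_hom n m A f - toric_hom n m A g"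
  unfolding toric_hom_def by (rule push_keys_diff)

lemma toric_hom_0[simp]: "toric_hom n m A 0 = 0" by (simp add: toric_hom_def)

lemma toric_hom_single: "toric_hom n m A (Poly_Mapping.single u c) = Poly_Mapping.single (Adeg_pm n m A u) c"
  unfolding toric_hom_def by simp

lemma toric_ideal_iff:
  "f \<in> toric_ideal TYPE('k::field) n m A \<longleftrightarrow> f \<in> polyring n \<and> toric_hom n m A (f::'k mpoly) = 0"
proof -
  have "(\<forall>b. (\<Sum>u\<in>{u\<in>Poly_Mapping.keys f. Adeg n m A u = b}. Poly_Mapping.lookup f u) = 0)
     \<longleftrightarrow> toric_hom n m A f = 0" (is "?L \<longleftrightarrow> ?R")
  proof
    assume L: ?L
    show ?R
    proof (rule poly_mapping_eqI)
      fix b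
      have "Poly_Mapping.lookup (toric_hom n m A f) b = (\<Sum>u\<in>{u\<in>Poly_Mapping.keys f. Adeg n m A u = Poly_Mapping.lookup b}. Poly_Mapping.lookup f u)"
        unfolding toric_hom_def lookup_push_keys Adeg_pm_eq_iff ..
      also have "\<dots> = 0" by (rule L[rule_format])
      finally show "Poly_Mapping.lookup (toric_hom n m A f) b = Poly_Mapping.lookup 0 b" by simp
    qed
  next
    assume R: ?R
    show ?L
    proof
      fix b
      show "(\<Sum>u\<in>{u\<in>Poly_Mapping.keys f. Adeg n m A u = b}. Poly_Mapping.lookup f u) = 0"
      proof (cases "\<exists>u0\<in>Poly_Mapping.keys f. Adeg n m A u0 = b")
        case True
        then obtain u0 where "Adeg n m A u0 = b" by blast
        then have bb: "b = Poly_Mapping.lookup (Adeg_pm n m A u0)" by (simp add: lookup_Adeg_pm)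
        have "(\<Sum>u\<in>{u\<in>Poly_Mapping.keys f. Adeg n m A u = b}. Poly_Mapping.lookup f u)
            = Poly_Mapping.lookup (toric_hom n m A f) (Adeg_pm n m A u0)"
          unfolding toric_hom_def lookup_push_keys Adeg_pm_eq_iff bb ..
        then show ?thesis using R by simp
      next
        case False
        have E: "{u\<in>Poly_Mapping.keys f. Adeg n m A u = b} = {}" using False by auto
        show ?thesis unfolding E by simp
      qed
    qed
  qed
  then show ?thesis unfolding toric_ideal_def mem_Collect_eq by simp
qed

lemma toric_ideal_subset_polyring: "toric_ideal TYPE('k::field) n m A \<subseteq> polyring n"
  by (auto simp: toric_ideal_iff)

lemma is_ideal_toric_ideal: "is_ideal n (toric_ideal TYPE('k::field) n m A)"
  unfolding is_ideal_def
  by (auto simp: toric_ideal_iff toric_hom_add toric_hom_mult)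

lemma toric_hom_1_nonzero: "toric_hom n m A (1::'k::field mpoly) \<noteq> 0"
proof -
  have "toric_hom n m A (1::'k mpoly) = Poly_Mapping.single (Adeg_pm n m A 0) 1"
    by (simp add: toric_hom_single flip: single_one)
  then show ?thesis by (metis lookup_single_eq one_neq_zero lookup_zero)
qed

lemma is_prime_toric_ideal: "is_prime_ideal n (toric_ideal TYPE('k::field) n m A)"
proof -
  have "(1::'k mpoly) \<notin> toric_ideal TYPE('k) n m A" using toric_hom_1_nonzero[of n m A, where 'k='k] by (simp add: toric_ideal_iff)
  then show ?thesis unfolding is_prime_ideal_def
    using is_ideal_toric_ideal[of n m A, where 'k='k] by (auto simp: toric_ideal_iff toric_hom_mult)
qed

lemma binom_in_toric_ideal:
  assumes "u \<in> exponents n" "v \<in> exponents n" "Adeg n m A u = Adeg n m A v"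
  shows "binom u v \<in> toric_ideal TYPE('k::field) n m A"
proof -
  have "binom u v \<in> polyring n" using assms by simp
  moreover have "toric_hom n m A (binom u v :: 'k mpoly) = 0"
  proof -
    have "Adeg_pm n m A u = Adeg_pm n m A v" using assms(3) by (simp add: Adeg_pm_eq_Adeg_pm)
    then show ?thesis by (simp add: binom_def monom_def toric_hom_diff toric_hom_single)
  qed
  ultimately show ?thesis by (simp add: toric_ideal_iff)
qed

lemma Adeg_eq_if_binom_in_toric_ideal:
  assumes "binom u v \<in> toric_ideal TYPE('k::field) n m A"
  shows "Adeg n m A u = Adeg n m A v"
proof -
  have "toric_hom n m A (binom u v :: 'k mpoly) = 0" using assms by (simp add: toric_ideal_iff)
  then have "Poly_Mapping.single (Adeg_pm n m A u) (1::'k) = Poly_Mapping.single (Adeg_pm n m A v) 1"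
    by (simp add: binom_def monom_def toric_hom_diff toric_hom_single)
  then have "Adeg_pm n m A u = Adeg_pm n m A v"
    by (metis lookup_single_eq lookup_single_not_eq one_neq_zero)
  then show ?thesis by (simp add: Adeg_pm_eq_Adeg_pm)
qed

lemma single_mult_binom: "Poly_Mapping.single 0 c * binom u v = Poly_Mapping.single u c - Poly_Mapping.single v (c::'k::field)"
  by (simp add: binom_def monom_def right_diff_distrib mult_single)

lemma toric_ideal_binom_repr:
  assumes f: "f \<in> toric_ideal TYPE('k::field) n m A"
  shows "\<exists>r. (\<forall>u\<in>Poly_Mapping.keys f. r u \<in> Poly_Mapping.keys f \<and> Adeg n m A (r u) = Adeg n m A u)
     \<and> f = (\<Sum>u\<in>Poly_Mapping.keys f. Poly_Mapping.single 0 (Poly_Mapping.lookup f u) * binom u (r u))"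
proof -
  define r where "r u = (SOME v. v \<in> Poly_Mapping.keys f \<and> Adeg n m A v = Adeg n m A u)" for u
  have r: "r u \<in> Poly_Mapping.keys f \<and> Adeg n m A (r u) = Adeg n m A u" if "u \<in> Poly_Mapping.keys f" for u
  proof -
    have "\<exists>v. v \<in> Poly_Mapping.keys f \<and> Adeg n m A v = Adeg n m A u" using that by auto
    then show ?thesis unfolding r_def by (rule someI_ex)
  qed
  have rcong: "Adeg n m A u = Adeg n m A u' \<Longrightarrow> r u = r u'" for u u'
    unfolding r_def by simp
  \<comment> \<open>\<open>r\<close> is constant on each \<open>A\<close>-degree class, over which the coefficients of \<open>f\<close> sum to zero.\<close>
  have Z: "push_keys r f = 0"
  proof (rule poly_mapping_eqI)
    fix w
    have "Poly_Mapping.lookup (push_keys r f) w = (\<Sum>u\<in>{u\<in>Poly_Mapping.keys f. r u = w}. Poly_Mapping.lookup f u)"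
      by (rule lookup_push_keys)
    also have "\<dots> = 0"
    proof (cases "\<exists>u0\<in>Poly_Mapping.keys f. r u0 = w")
      case True
      then obtain u0 where u0: "u0 \<in> Poly_Mapping.keys f" "r u0 = w" by blast
      have "{u\<in>Poly_Mapping.keys f. r u = w} = {u\<in>Poly_Mapping.keys f. Adeg n m A u = Adeg n m A w}"
      proof (intro set_eqI iffI)
        fix u assume "u \<in> {u\<in>Poly_Mapping.keys f. r u = w}"
        then show "u \<in> {u\<in>Poly_Mapping.keys f. Adeg n m A u = Adeg n m A w}" using r[of u] by auto
      next
        fix u assume u: "u \<in> {u\<in>Poly_Mapping.keys f. Adeg n m A u = Adeg n m A w}"
        have "Adeg n m A u = Adeg n m A u0" using u r[OF u0(1)] u0(2) by simp
        then have "r u = r u0" by (rule rcong)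
        then show "u \<in> {u\<in>Poly_Mapping.keys f. r u = w}" using u u0 by auto
      qed
      then show ?thesis using f unfolding toric_ideal_def by simp
    next
      case False
      then have "{u\<in>Poly_Mapping.keys f. r u = w} = {}" by auto
      then show ?thesis by (simp only: sum.empty)
    qed
    finally show "Poly_Mapping.lookup (push_keys r f) w = Poly_Mapping.lookup 0 w" by simp
  qed
  have "(\<Sum>u\<in>Poly_Mapping.keys f. Poly_Mapping.single 0 (Poly_Mapping.lookup f u) * binom u (r u)) = f - push_keys r f"
    unfolding push_keys_def by (simp add: single_mult_binom sum_subtractf flip: poly_mapping_sum_single)
  then show ?thesis using r Z by (intro exI[of _ r]) simp
qed

lemma toric_ideal_subset_ideal:
  assumes J: "is_ideal n J"
    and fibres: "\<And>u v. u \<in> exponents n \<Longrightarrow> v \<in> exponents n \<Longrightarrow> Adeg n m A u = Adeg n m A v \<Longrightarrow> binom u v \<in> J"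
  shows "toric_ideal TYPE('k::field) n m A \<subseteq> J"
proof
  fix f :: "'k mpoly" assume f: "f \<in> toric_ideal TYPE('k) n m A"
  obtain r where r: "\<forall>u\<in>Poly_Mapping.keys f. r u \<in> Poly_Mapping.keys f \<and> Adeg n m A (r u) = Adeg n m A u"
    and fe: "f = (\<Sum>u\<in>Poly_Mapping.keys f. Poly_Mapping.single 0 (Poly_Mapping.lookup f u) * binom u (r u))"
    using toric_ideal_binom_repr[OF f] by blast
  have fp: "f \<in> polyring n" using f by (simp add: toric_ideal_iff)
  have "(\<Sum>u\<in>Poly_Mapping.keys f. Poly_Mapping.single 0 (Poly_Mapping.lookup f u) * binom u (r u)) \<in> J"
  proof (rule ideal_sum[OF J])
    fix u assume u: "u \<in> Poly_Mapping.keys f"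
    have "u \<in> exponents n" "r u \<in> exponents n" using u r keys_polyring[OF fp] by auto
    then have "binom u (r u) \<in> J" using fibres r u by metis
    then show "Poly_Mapping.single 0 (Poly_Mapping.lookup f u) * binom u (r u) \<in> J"
      by (rule ideal_mult_mem[OF J polyring_single[OF zero_in_exponents]])
  qed
  then show "f \<in> J" using fe by simp
qed

lemma toric_ideal_mono_fibres:
  assumes "\<forall>u\<in>exponents n. \<forall>v\<in>exponents n. Adeg n m1 A1 u = Adeg n m1 A1 v \<longrightarrow> Adeg n m2 A2 u = Adeg n m2 A2 v"
  shows "toric_ideal TYPE('k::field) n m1 A1 \<subseteq> toric_ideal TYPE('k) n m2 A2"
  by (rule toric_ideal_subset_ideal[OF is_ideal_toric_ideal]) (use assms in \<open>auto intro: binom_in_toric_ideal\<close>)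

definition exp_diff :: "(nat \<Rightarrow>\<^sub>0 nat) \<Rightarrow> (nat \<Rightarrow>\<^sub>0 nat) \<Rightarrow> nat \<Rightarrow> int" where
  "exp_diff u v i = int (Poly_Mapping.lookup u i) - int (Poly_Mapping.lookup v i)"

definition parallel :: "(nat \<Rightarrow> int) \<Rightarrow> (nat \<Rightarrow> int) \<Rightarrow> bool" where
  "parallel z d \<longleftrightarrow> (\<forall>i j. z i * d j = z j * d i)"

definition kernel_vec :: "nat \<Rightarrow> nat \<Rightarrow> (nat \<Rightarrow> nat \<Rightarrow> int) \<Rightarrow> (nat \<Rightarrow> int) \<Rightarrow> bool" where
  "kernel_vec n m A z \<longleftrightarrow> (\<forall>i. n \<le> i \<longrightarrow> z i = 0) \<and> (\<forall>j<m. (\<Sum>i<n. z i * A i j) = 0)"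

lemma lookup_exponents_beyond: "u \<in> exponents n \<Longrightarrow> n \<le> i \<Longrightarrow> Poly_Mapping.lookup u i = 0"
proof (rule ccontr)
  assume u: "u \<in> exponents n" and i: "n \<le> i" and "Poly_Mapping.lookup u i \<noteq> 0"
  then have "i \<in> Poly_Mapping.keys u" by (simp add: in_keys_iff)
  then show False using u i by (auto simp: exponents_def)
qed

lemma exp_diff_beyond: "u \<in> exponents n \<Longrightarrow> v \<in> exponents n \<Longrightarrow> n \<le> i \<Longrightarrow> exp_diff u v i = 0"
  by (simp add: exp_diff_def lookup_exponents_beyond)

lemma Adeg_eq_iff_kernel_vec:
  assumes "u \<in> exponents n" "v \<in> exponents n"
  shows "Adeg n m A u = Adeg n m A v \<longleftrightarrow> kernel_vec n m A (exp_diff u v)"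
proof -
  have "Adeg n m A u = Adeg n m A v \<longleftrightarrow> (\<forall>j<m. (\<Sum>i<n. int (Poly_Mapping.lookup u i) * A i j) = (\<Sum>i<n. int (Poly_Mapping.lookup v i) * A i j))"
    unfolding Adeg_def fun_eq_iff by auto
  also have "\<dots> \<longleftrightarrow> (\<forall>j<m. (\<Sum>i<n. exp_diff u v i * A i j) = 0)"
    by (simp add: exp_diff_def left_diff_distrib sum_subtractf)
  finally show ?thesis unfolding kernel_vec_def using exp_diff_beyond[OF assms] by auto
qed

lemma exp_diff_nonzero: "u \<noteq> v \<Longrightarrow> \<exists>i. exp_diff u v i \<noteq> 0"
  by (metis poly_mapping_eqI exp_diff_def eq_iff_diff_eq_0 of_nat_eq_iff)

lemma exp_diff_swap: "exp_diff v u i = - exp_diff u v i" by (simp add: exp_diff_def)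

definition pos_part :: "(nat \<Rightarrow> int) \<Rightarrow> nat \<Rightarrow>\<^sub>0 nat" where
  "pos_part z = Abs_poly_mapping (\<lambda>i. nat (z i))"

definition neg_part :: "(nat \<Rightarrow> int) \<Rightarrow> nat \<Rightarrow>\<^sub>0 nat" where
  "neg_part z = pos_part (\<lambda>i. - z i)"

lemma lookup_pos_part:
  assumes "\<forall>i. n \<le> i \<longrightarrow> z i = 0"
  shows "Poly_Mapping.lookup (pos_part z) = (\<lambda>i. nat (z i))"
proof -
  have "finite {i. nat (z i) \<noteq> 0}"
    by (rule finite_subset[of _ "{..<n}"]) (use assms in \<open>auto simp: not_less[symmetric]\<close>)
  then show ?thesis unfolding pos_part_def by simp
qed

lemma lookup_neg_part:
  assumes "\<forall>i. n \<le> i \<longrightarrow> z i = 0"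
  shows "Poly_Mapping.lookup (neg_part z) = (\<lambda>i. nat (- z i))"
  unfolding neg_part_def by (rule lookup_pos_part) (use assms in auto)

lemma pos_part_exponents: "\<forall>i. n \<le> i \<longrightarrow> z i = 0 \<Longrightarrow> pos_part z \<in> exponents n"
  unfolding exponents_def using lookup_pos_part[of n z]
  by (auto simp: in_keys_iff not_less[symmetric])

lemma neg_part_exponents: "\<forall>i. n \<le> i \<longrightarrow> z i = 0 \<Longrightarrow> neg_part z \<in> exponents n"
  unfolding neg_part_def by (rule pos_part_exponents) auto

lemma exp_diff_pos_neg_part: "\<forall>i. n \<le> i \<longrightarrow> z i = 0 \<Longrightarrow> exp_diff (pos_part z) (neg_part z) = z"
  using lookup_pos_part[of n z] lookup_neg_part[of n z] by (auto simp: exp_diff_def fun_eq_iff)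

lemma Adeg_pos_part_eq_neg_part: "kernel_vec n m A z \<Longrightarrow> Adeg n m A (pos_part z) = Adeg n m A (neg_part z)"
proof -
  assume L: "kernel_vec n m A z"
  then have zs: "\<forall>i. n \<le> i \<longrightarrow> z i = 0" by (simp add: kernel_vec_def)
  have "kernel_vec n m A (exp_diff (pos_part z) (neg_part z))" using exp_diff_pos_neg_part[OF zs] L by simp
  then show ?thesis using Adeg_eq_iff_kernel_vec[OF pos_part_exponents[OF zs] neg_part_exponents[OF zs]] by simp
qed

lemma kernel_vec_diff_smult: "kernel_vec n m A z \<Longrightarrow> kernel_vec n m A w \<Longrightarrow> kernel_vec n m A (\<lambda>i. z i - q * w i)"
  unfolding kernel_vec_def
  by (auto simp: left_diff_distrib sum_subtractf mult.assoc sum_distrib_left[symmetric])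

lemma kernel_vec_uminus: "kernel_vec n m A z \<Longrightarrow> kernel_vec n m A (\<lambda>i. - z i)"
  unfolding kernel_vec_def by (auto simp: sum_negf)

lemma parallel_refl: "parallel d d" by (simp add: parallel_def mult.commute)

lemma kernel_vec_if_parallel:
  assumes d: "kernel_vec n m A d" and i0: "d i0 \<noteq> 0" and p: "parallel z d" and zs: "\<forall>i. n \<le> i \<longrightarrow> z i = 0"
  shows "kernel_vec n m A z"
  unfolding kernel_vec_def
proof (intro conjI allI impI)
  fix i assume "n \<le> i" then show "z i = 0" using zs by auto
next
  fix j assume j: "j < m"
  have "d i0 * (\<Sum>i<n. z i * A i j) = (\<Sum>i<n. (z i * d i0) * A i j)"
    by (simp add: sum_distrib_left mult_ac)
  also have "\<dots> = (\<Sum>i<n. (z i0 * d i) * A i j)"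
    using p unfolding parallel_def by simp
  also have "\<dots> = z i0 * (\<Sum>i<n. d i * A i j)"
    by (simp add: sum_distrib_left mult_ac)
  also have "\<dots> = 0" using d j unfolding kernel_vec_def by simp
  finally show "(\<Sum>i<n. z i * A i j) = 0" using i0 by simp
qed

text \<open>Columns are indexed by pairs \<open>(a, b)\<close> encoded as \<open>a * n + b\<close>; column \<open>(a, b)\<close> is
  \<open>d\<^sub>b e\<^sub>a - d\<^sub>a e\<^sub>b\<close>, so its integer kernel consists of the vectors parallel to \<open>d\<close>.\<close>

definition line_config :: "nat \<Rightarrow> (nat \<Rightarrow> int) \<Rightarrow> nat \<Rightarrow> nat \<Rightarrow> int" where
  "line_config n d i j = (if i = j div n then d (j mod n) else 0) - (if i = j mod n then d (j div n) else 0)"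

lemma sum_line_config:
  assumes "j < n * n"
  shows "(\<Sum>i<n. z i * line_config n d i j) = z (j div n) * d (j mod n) - z (j mod n) * d (j div n)"
proof -
  have a: "j div n < n" using assms by (simp add: less_mult_imp_div_less)
  have b: "j mod n < n" using assms by (cases "n = 0") auto
  have e: "z i * line_config n d i j = (if i = j div n then z i * d (j mod n) else 0)
       - (if i = j mod n then z i * d (j div n) else 0)" for i
    unfolding line_config_def by (simp add: right_diff_distrib)
  have "(\<Sum>i<n. z i * line_config n d i j) = (\<Sum>i<n. (if i = j div n then z i * d (j mod n) else 0))
       - (\<Sum>i<n. (if i = j mod n then z i * d (j div n) else 0))"
    unfolding e by (rule sum_subtractf)
  also have "\<dots> = z (j div n) * d (j mod n) - z (j mod n) * d (j div n)"
    using a b by (simp add: sum.delta)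
  finally show ?thesis .
qed

lemma kernel_vec_line_config:
  assumes ds: "\<forall>i. n \<le> i \<longrightarrow> d i = 0" and zs: "\<forall>i. n \<le> i \<longrightarrow> z i = 0"
  shows "kernel_vec n (n * n) (line_config n d) z \<longleftrightarrow> parallel z d"
proof
  assume L: "kernel_vec n (n * n) (line_config n d) z"
  show "parallel z d" unfolding parallel_def
  proof (intro allI)
    fix a b
    show "z a * d b = z b * d a"
    proof (cases "a < n \<and> b < n")
      case True
      define j where "j = a * n + b"
      have "a * n + b < Suc a * n" using True by simp
      moreover have "Suc a * n \<le> n * n" using True by (intro mult_le_mono1) simp
      ultimately have jl: "j < n * n" unfolding j_def by linarith
      have "j div n = a" "j mod n = b" unfolding j_def using True by auto
      then show ?thesis using L jl sum_line_config[OF jl, of z d] unfolding kernel_vec_def by simp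
    next
      case False
      then show ?thesis using ds zs by (metis mult_zero_left mult_zero_right not_less)
    qed
  qed
next
  assume P: "parallel z d"
  show "kernel_vec n (n * n) (line_config n d) z" unfolding kernel_vec_def
    using zs sum_line_config P by (auto simp: parallel_def)
qed

lemma Adeg_line_config_eq_iff:
  assumes "u \<in> exponents n" "v \<in> exponents n" "\<forall>i. n \<le> i \<longrightarrow> d i = 0"
  shows "Adeg n (n * n) (line_config n d) u = Adeg n (n * n) (line_config n d) v \<longleftrightarrow> parallel (exp_diff u v) d"
  using Adeg_eq_iff_kernel_vec[OF assms(1,2)] kernel_vec_line_config[OF assms(3), of "exp_diff u v"] exp_diff_beyond[OF assms(1,2)] by auto

lemma monom_decomp:
  assumes "\<forall>i. Poly_Mapping.lookup u i = Poly_Mapping.lookup c i + k * Poly_Mapping.lookup a i"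
  shows "(monom u :: 'k::field mpoly) = monom c * monom a ^ k"
  using assms
proof (induction k arbitrary: u)
  case 0
  then have "u = c" by (intro poly_mapping_eqI) simp
  then show ?case by simp
next
  case (Suc k)
  define u' where "u' = u - a"
  have lu': "Poly_Mapping.lookup u' i = Poly_Mapping.lookup c i + k * Poly_Mapping.lookup a i" for i
    unfolding u'_def using Suc.prems by (simp add: lookup_minus)
  have "u = u' + a"
    by (rule poly_mapping_eqI) (simp add: lookup_add lu' Suc.prems)
  then have "(monom u :: 'k mpoly) = monom u' * monom a" by (simp add: monom_mult)
  also have "\<dots> = monom c * monom a ^ k * monom a" using Suc.IH lu' by simp
  finally show ?case by (simp add: mult_ac)
qed

lemma nat_split_of_int_diff:
  fixes x y k :: nat and t :: int
  assumes "int x - int y = int k * t"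
  shows "x = (x - k * nat t) + k * nat t \<and> y = (x - k * nat t) + k * nat (- t)"
proof (cases "t \<ge> 0")
  case True
  then have e: "int (k * nat t) = int k * t" by simp
  have "int (k * nat t) \<le> int x" using assms e by linarith
  then have le: "k * nat t \<le> x" by (simp only: of_nat_le_iff)
  have d: "int (x - k * nat t) = int x - int (k * nat t)" using le by (rule of_nat_diff)
  have "int y = int (x - k * nat t)" using assms e d by linarith
  then have "y = x - k * nat t" by (simp only: of_nat_eq_iff)
  then show ?thesis using le True by simp
next
  case False
  then have "int (k * nat (- t)) = - (int k * t)" by simp
  moreover have "nat t = 0" using False by simp
  moreover have e2: "int (x + k * nat (- t)) = int x + int (k * nat (- t))" by (rule of_nat_add)
  ultimately have "int y = int (x + k * nat (- t))" using assms by linarith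
  then have "y = x + k * nat (- t)" by (simp only: of_nat_eq_iff)
  then show ?thesis using \<open>nat t = 0\<close> by simp
qed

lemma binom_in_gen_binom_nat:
  assumes u: "u \<in> exponents n" and v: "v \<in> exponents n" and ws: "\<forall>i. n \<le> i \<longrightarrow> w i = 0"
    and q: "\<forall>i. exp_diff u v i = int k * w i"
  shows "(binom u v :: 'k::field mpoly) \<in> poly_ideal_gen n {binom (pos_part w) (neg_part w)}"
proof -
  define a where "a = pos_part w"
  define b where "b = neg_part w"
  have la: "Poly_Mapping.lookup a i = nat (w i)" for i unfolding a_def using lookup_pos_part[OF ws] by simp
  have lb: "Poly_Mapping.lookup b i = nat (- w i)" for i unfolding b_def using lookup_neg_part[OF ws] by simp
  define c0 where "c0 i = Poly_Mapping.lookup u i - k * nat (w i)" for i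
  have fin: "finite {i. c0 i \<noteq> 0}"
    by (rule finite_subset[of _ "Poly_Mapping.keys u"]) (auto simp: c0_def in_keys_iff)
  define c where "c = Abs_poly_mapping c0"
  have lc: "Poly_Mapping.lookup c i = c0 i" for i unfolding c_def using fin by simp
  have spl: "Poly_Mapping.lookup u i = Poly_Mapping.lookup c i + k * Poly_Mapping.lookup a i \<and>
             Poly_Mapping.lookup v i = Poly_Mapping.lookup c i + k * Poly_Mapping.lookup b i" for i
    using nat_split_of_int_diff[of "Poly_Mapping.lookup u i" "Poly_Mapping.lookup v i" k "w i"] q
    unfolding lc c0_def la lb exp_diff_def by simp
  have cE: "c \<in> exponents n"
  proof -
    have "Poly_Mapping.keys c \<subseteq> Poly_Mapping.keys u" by (auto simp: in_keys_iff lc c0_def)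
    then show ?thesis using u by (auto simp: exponents_def)
  qed
  have aE: "a \<in> exponents n" unfolding a_def by (rule pos_part_exponents[OF ws])
  have bE: "b \<in> exponents n" unfolding b_def by (rule neg_part_exponents[OF ws])
  have mu: "(monom u :: 'k mpoly) = monom c * monom a ^ k" by (rule monom_decomp) (use spl in auto)
  have mv: "(monom v :: 'k mpoly) = monom c * monom b ^ k" by (rule monom_decomp) (use spl in auto)
  define S :: "'k mpoly" where "S = (\<Sum>i<k. monom b ^ (k - Suc i) * monom a ^ i)"
  have "(binom u v :: 'k mpoly) = monom c * (monom a ^ k - monom b ^ k)"
    unfolding binom_def mu mv by (simp add: right_diff_distrib)
  also have "\<dots> = (monom c * S) * binom a b"
    unfolding power_diff_sumr2[of "monom a" k "monom b"] S_def binom_def by (simp add: mult_ac)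
  finally have e: "(binom u v :: 'k mpoly) = (monom c * S) * binom a b" .
  have "monom c * S \<in> polyring n" unfolding S_def using aE bE cE by (auto intro!: polyring_sum)
  then show ?thesis unfolding e a_def[symmetric] b_def[symmetric] by (rule mult_in_gen_singleton)
qed

lemma binom_in_gen_binom:
  assumes u: "u \<in> exponents n" and v: "v \<in> exponents n" and ws: "\<forall>i. n \<le> i \<longrightarrow> w i = 0"
    and q: "\<forall>i. exp_diff u v i = q * w i"
  shows "(binom u v :: 'k::field mpoly) \<in> poly_ideal_gen n {binom (pos_part w) (neg_part w)}"
proof (cases "q \<ge> 0")
  case True
  then have "\<forall>i. exp_diff u v i = int (nat q) * w i" using q by simp
  then show ?thesis by (rule binom_in_gen_binom_nat[OF u v ws])
next
  case False
  have "exp_diff v u i = int (nat (- q)) * w i" for i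
    using q exp_diff_swap[of v u i] False by simp
  then have "\<forall>i. exp_diff v u i = int (nat (- q)) * w i" by simp
  then have "(binom v u :: 'k mpoly) \<in> poly_ideal_gen n {binom (pos_part w) (neg_part w)}" by (rule binom_in_gen_binom_nat[OF v u ws])
  then have "(- 1) * (binom v u :: 'k mpoly) \<in> poly_ideal_gen n {binom (pos_part w) (neg_part w)}"
    by (rule gen_mult) simp
  then show ?thesis by (simp add: binom_def)
qed

lemma kernel_vec_generator:
  assumes Ld: "kernel_vec n m A d" and i0: "d i0 \<noteq> 0"
    and allpar: "\<And>z. kernel_vec n m A z \<Longrightarrow> parallel z d"
  obtains w where "kernel_vec n m A w" "w i0 \<noteq> 0" "\<And>z. kernel_vec n m A z \<Longrightarrow> \<exists>q. \<forall>i. z i = q * w i"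
proof -
  define S where "S = {k::nat. 0 < k \<and> (\<exists>z. kernel_vec n m A z \<and> z i0 = int k)}"
  have "nat \<bar>d i0\<bar> \<in> S"
  proof (cases "d i0 > 0")
    case True then show ?thesis unfolding S_def using Ld by (auto intro!: exI[of _ d])
  next
    case False then show ?thesis unfolding S_def using Ld i0
      by (auto intro!: exI[of _ "\<lambda>i. - d i"] kernel_vec_uminus)
  qed
  define g where "g = (LEAST k. k \<in> S)"
  have gS: "g \<in> S" unfolding g_def by (rule LeastI) fact
  have gmin: "\<And>k. k \<in> S \<Longrightarrow> g \<le> k" unfolding g_def by (rule Least_le)
  obtain w where Lw: "kernel_vec n m A w" and wi0: "w i0 = int g" and gpos: "0 < g" using gS unfolding S_def by blast
  have "\<exists>q. \<forall>i. z i = q * w i" if Lz: "kernel_vec n m A z" for z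
  proof -
    define q where "q = z i0 div int g"
    define z' where "z' i = z i - q * w i" for i
    have Lz': "kernel_vec n m A z'" unfolding z'_def by (rule kernel_vec_diff_smult[OF Lz Lw])
    have z'i0: "z' i0 = z i0 mod int g" unfolding z'_def q_def wi0
      using minus_mult_div_eq_mod[of "z i0" "int g"] by (simp add: mult.commute)
    have "z' i0 = 0"
    proof (rule ccontr)
      assume "z' i0 \<noteq> 0"
      moreover have "z' i0 \<ge> 0" "z' i0 < int g" using z'i0 gpos by simp_all
      ultimately have "nat (z' i0) \<in> S" unfolding S_def using Lz' by (auto intro!: exI[of _ z'])
      then have "g \<le> nat (z' i0)" by (rule gmin)
      then show False using \<open>z' i0 < int g\<close> \<open>z' i0 \<ge> 0\<close> by linarith
    qed
    moreover have "parallel z' d" by (rule allpar[OF Lz'])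
    ultimately have "z' j = 0" for j
      using i0 unfolding parallel_def by (metis mult_eq_0_iff mult_zero_left)
    then show ?thesis unfolding z'_def by (intro exI[of _ q]) (simp add: algebra_simps)
  qed
  moreover have "w i0 \<noteq> 0" using wi0 gpos by simp
  ultimately show ?thesis using that Lw by blast
qed

lemma toric_ideal_principal_if_parallel:
  assumes u0: "u0 \<in> exponents n" and v0: "v0 \<in> exponents n" and uv0: "u0 \<noteq> v0"
    and A0: "Adeg n m A u0 = Adeg n m A v0"
    and allpar: "\<forall>u\<in>exponents n. \<forall>v\<in>exponents n. Adeg n m A u = Adeg n m A v \<longrightarrow> parallel (exp_diff u v) (exp_diff u0 v0)"
  shows "\<exists>a\<in>exponents n. \<exists>b\<in>exponents n. a \<noteq> b \<and> Adeg n m A a = Adeg n m A b \<and>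
     toric_ideal TYPE('k::field) n m A \<subseteq> poly_ideal_gen n {binom a b}"
proof -
  have Ld: "kernel_vec n m A (exp_diff u0 v0)" using Adeg_eq_iff_kernel_vec[OF u0 v0] A0 by simp
  obtain i0 where i0: "exp_diff u0 v0 i0 \<noteq> 0" using exp_diff_nonzero[OF uv0] by blast
  have "parallel z (exp_diff u0 v0)" if Lz: "kernel_vec n m A z" for z
  proof -
    have zs: "\<forall>i. n \<le> i \<longrightarrow> z i = 0" using Lz by (simp add: kernel_vec_def)
    have "parallel (exp_diff (pos_part z) (neg_part z)) (exp_diff u0 v0)"
      using allpar pos_part_exponents[OF zs] neg_part_exponents[OF zs] Adeg_pos_part_eq_neg_part[OF Lz] by blast
    then show ?thesis using exp_diff_pos_neg_part[OF zs] by simp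
  qed
  then obtain w where Lw: "kernel_vec n m A w" and wi0: "w i0 \<noteq> 0"
    and cyc: "\<And>z. kernel_vec n m A z \<Longrightarrow> \<exists>q. \<forall>i. z i = q * w i"
    using kernel_vec_generator[OF Ld i0] by blast
  have ws: "\<forall>i. n \<le> i \<longrightarrow> w i = 0" using Lw by (simp add: kernel_vec_def)
  define a where "a = pos_part w"
  define b where "b = neg_part w"
  have aE: "a \<in> exponents n" unfolding a_def by (rule pos_part_exponents[OF ws])
  have bE: "b \<in> exponents n" unfolding b_def by (rule neg_part_exponents[OF ws])
  have "exp_diff a b = w" unfolding a_def b_def by (rule exp_diff_pos_neg_part[OF ws])
  then have ab: "a \<noteq> b" using wi0 by (auto simp: exp_diff_def)
  have Aab: "Adeg n m A a = Adeg n m A b" unfolding a_def b_def by (rule Adeg_pos_part_eq_neg_part[OF Lw])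
  have "toric_ideal TYPE('k) n m A \<subseteq> poly_ideal_gen n {binom a b}"
  proof (rule toric_ideal_subset_ideal)
    show "is_ideal n (poly_ideal_gen n {binom a b})" using aE bE by (intro gen_ideal) simp
  next
    fix u v assume uv: "u \<in> exponents n" "v \<in> exponents n" "Adeg n m A u = Adeg n m A v"
    then have "kernel_vec n m A (exp_diff u v)" using Adeg_eq_iff_kernel_vec by blast
    then obtain q where "\<forall>i. exp_diff u v i = q * w i" using cyc by blast
    then show "binom u v \<in> poly_ideal_gen n {binom a b}"
      unfolding a_def b_def by (rule binom_in_gen_binom[OF uv(1,2) ws])
  qed
  then show ?thesis using aE bE ab Aab by blast
qed

section \<open>Dickson's lemma\<close>

lemma no_infinite_descent_on:
  fixes h :: "nat \<Rightarrow> nat"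
  assumes Y: "infinite Y" and dec: "\<forall>i\<in>Y. \<forall>j\<in>Y. i < j \<longrightarrow> h j < h i"
  shows False
proof -
  obtain x0 where x0: "x0 \<in> Y" using infinite_imp_nonempty[OF Y] by blast
  define Y' where "Y' = Y - {..x0}"
  have inf: "infinite Y'" unfolding Y'_def using Y by auto
  have inj: "inj_on h Y'"
  proof (rule inj_onI)
    fix x y assume "x \<in> Y'" "y \<in> Y'" "h x = h y"
    then show "x = y" using dec unfolding Y'_def by (metis DiffD1 less_irrefl nat_neq_iff)
  qed
  have "h ` Y' \<subseteq> {..<h x0}"
  proof
    fix y assume "y \<in> h ` Y'"
    then obtain x where x: "x \<in> Y'" "y = h x" by auto
    then have "x0 < x" "x \<in> Y" by (auto simp: Y'_def)
    then show "y \<in> {..<h x0}" using dec x0 x(2) by auto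
  qed
  then have "finite (h ` Y')" by (rule finite_subset) simp
  then have "finite Y'" using inj by (rule finite_imageD)
  then show False using inf by simp
qed

lemma infinite_subset_mono:
  fixes g :: "nat \<Rightarrow> nat"
  assumes Y: "infinite Y"
  obtains Y' where "Y' \<subseteq> Y" "infinite Y'" "\<forall>i\<in>Y'. \<forall>j\<in>Y'. i < j \<longrightarrow> g i \<le> g j"
proof -
  define f where "f X = (if \<exists>i j. X = {i, j} \<and> i < j \<and> g j < g i then 1 else (0::nat))" for X
  have fij: "f {i, j} = (if g j < g i then 1 else 0)" if "i < j" for i j
  proof -
    have "(\<exists>i' j'. {i, j} = {i', j'} \<and> i' < j' \<and> g j' < g i') \<longleftrightarrow> g j < g i"
      using that by (auto simp: doubleton_eq_iff)
    then show ?thesis unfolding f_def by simp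
  qed
  have "\<forall>x\<in>Y. \<forall>y\<in>Y. x \<noteq> y \<longrightarrow> f {x, y} < 2" unfolding f_def by auto
  then have "\<exists>Y' t. Y' \<subseteq> Y \<and> infinite Y' \<and> t < 2 \<and> (\<forall>x\<in>Y'. \<forall>y\<in>Y'. x \<noteq> y \<longrightarrow> f {x, y} = t)"
    by (rule Ramsey2[OF Y])
  then obtain Y' t where Y': "Y' \<subseteq> Y" "infinite Y'" "t < 2" "\<forall>x\<in>Y'. \<forall>y\<in>Y'. x \<noteq> y \<longrightarrow> f {x, y} = t"
    by blast
  have colour: "g j < g i \<longleftrightarrow> t = 1" if "i \<in> Y'" "j \<in> Y'" "i < j" for i j
    using Y'(3) Y'(4)[rule_format, of i j] that fij[OF that(3)] by (cases "g j < g i") auto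
  have "t \<noteq> 1"
  proof
    assume "t = 1"
    then have "\<forall>i\<in>Y'. \<forall>j\<in>Y'. i < j \<longrightarrow> g j < g i" using colour by blast
    then show False by (rule no_infinite_descent_on[OF Y'(2)])
  qed
  then have "\<forall>i\<in>Y'. \<forall>j\<in>Y'. i < j \<longrightarrow> g i \<le> g j" using colour by (meson not_le)
  then show ?thesis by (rule that[OF Y'(1,2)])
qed

lemma dickson_infinite_subset:
  fixes s :: "nat \<Rightarrow> nat \<Rightarrow> nat"
  assumes "infinite (Z::nat set)"
  shows "\<exists>Y\<subseteq>Z. infinite Y \<and> (\<forall>i\<in>Y. \<forall>j\<in>Y. i < j \<longrightarrow> (\<forall>c<N. s i c \<le> s j c))"
proof (induction N)
  case 0
  then show ?case using assms by blast
next
  case (Suc N)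
  then obtain Y where Y: "Y \<subseteq> Z" "infinite Y" "\<forall>i\<in>Y. \<forall>j\<in>Y. i < j \<longrightarrow> (\<forall>c<N. s i c \<le> s j c)"
    by blast
  obtain Y' where Y': "Y' \<subseteq> Y" "infinite Y'" "\<forall>i\<in>Y'. \<forall>j\<in>Y'. i < j \<longrightarrow> s i N \<le> s j N"
    by (rule infinite_subset_mono[OF Y(2)])
  have "\<forall>i\<in>Y'. \<forall>j\<in>Y'. i < j \<longrightarrow> (\<forall>c<Suc N. s i c \<le> s j c)"
    using Y(3) Y'(1,3) by (auto simp: less_Suc_eq)
  then show ?case using Y(1) Y'(1,2) by (intro exI[of _ Y']) auto
qed

lemma dickson_pair:
  fixes s :: "nat \<Rightarrow> nat \<Rightarrow> nat"
  shows "\<exists>i j. i < j \<and> (\<forall>c<N. s i c \<le> s j c)"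
proof -
  have "infinite (UNIV::nat set)" by simp
  then have "\<exists>Y\<subseteq>UNIV. infinite Y \<and> (\<forall>i\<in>Y. \<forall>j\<in>Y. i < j \<longrightarrow> (\<forall>c<N. s i c \<le> s j c))"
    by (rule dickson_infinite_subset)
  then obtain Y where Y: "infinite Y" "\<forall>i\<in>Y. \<forall>j\<in>Y. i < j \<longrightarrow> (\<forall>c<N. s i c \<le> s j c)"
    by blast
  obtain i where i: "i \<in> Y" using infinite_imp_nonempty[OF Y(1)] by blast
  have "infinite (Y - {..i})" using Diff_infinite_finite[OF finite_atMost Y(1)] .
  then obtain j where j: "j \<in> Y - {..i}" using infinite_imp_nonempty by blast
  then have ij: "i < j" "j \<in> Y" by auto
  have "\<forall>c<N. s i c \<le> s j c" using Y(2) i ij by blast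
  then show ?thesis using ij(1) by blast
qed

lemma dickson_basis:
  fixes S :: "'a set" and h :: "'a \<Rightarrow> nat \<Rightarrow> nat"
  shows "\<exists>F. finite F \<and> F \<subseteq> S \<and> (\<forall>x\<in>S. \<exists>y\<in>F. \<forall>c<N. h y c \<le> h x c)"
proof (rule ccontr)
  \<comment> \<open>Otherwise pick \<open>x\<^sub>0, x\<^sub>1, \<dots>\<close> in \<open>S\<close>, none dominating an earlier one; \<open>dickson_pair\<close> forbids this.\<close>
  assume no: "\<not> ?thesis"
  define P where "P F x \<longleftrightarrow> x \<in> S \<and> (\<forall>y\<in>F. \<not> (\<forall>c<N. h y c \<le> h x c))" for F x
  have exP: "\<exists>x. P F x" if "finite F" "F \<subseteq> S" for F
  proof (rule ccontr)
    assume "\<not> (\<exists>x. P F x)"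
    then have all: "\<forall>x\<in>S. \<exists>y\<in>F. \<forall>c<N. h y c \<le> h x c" unfolding P_def by auto
    have "\<exists>F. finite F \<and> F \<subseteq> S \<and> (\<forall>x\<in>S. \<exists>y\<in>F. \<forall>c<N. h y c \<le> h x c)"
      by (intro exI[of _ F] conjI) (use that all in auto)
    with no show False by (rule notE)
  qed
  define pick where "pick F = (SOME x. P F x)" for F
  define G where "G = rec_nat {} (\<lambda>k Gk. insert (pick Gk) Gk)"
  have G0: "G 0 = {}" unfolding G_def by simp
  have GSuc: "G (Suc k) = insert (pick (G k)) (G k)" for k unfolding G_def by simp
  have GS: "finite (G k) \<and> G k \<subseteq> S" for k
  proof (induction k)
    case 0 then show ?case by (simp add: G0)
  next
    case (Suc k)
    have "P (G k) (pick (G k))" unfolding pick_def by (rule someI_ex[OF exP]) (use Suc in auto)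
    then show ?case using Suc unfolding GSuc P_def by simp
  qed
  define sq where "sq k = pick (G k)" for k
  have Psq: "P (G k) (sq k)" for k unfolding sq_def pick_def by (rule someI_ex[OF exP]) (use GS in auto)
  have mem: "i < k \<Longrightarrow> sq i \<in> G k" for i k
  proof (induction k)
    case 0 then show ?case by simp
  next
    case (Suc k)
    then show ?case unfolding sq_def GSuc by (auto simp: less_Suc_eq)
  qed
  obtain i j where ij: "i < j" "\<forall>c<N. h (sq i) c \<le> h (sq j) c"
    using dickson_pair[where s="\<lambda>k. h (sq k)" and N=N] by blast
  have "sq i \<in> G j" using mem ij(1) by blast
  then show False using Psq[of j] ij(2) unfolding P_def by blast
qed

definition exp_le :: "(nat \<Rightarrow>\<^sub>0 nat) \<Rightarrow> (nat \<Rightarrow>\<^sub>0 nat) \<Rightarrow> bool" where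
  "exp_le u v \<longleftrightarrow> (\<forall>i. Poly_Mapping.lookup u i \<le> Poly_Mapping.lookup v i)"

lemma exp_le_decomp: "exp_le u' u \<Longrightarrow> u = (u - u') + u'"
  by (rule poly_mapping_eqI) (simp add: exp_le_def lookup_add lookup_minus)

lemma exponents_diff: "u \<in> exponents n \<Longrightarrow> u - u' \<in> exponents n"
proof -
  assume u: "u \<in> exponents n"
  have "Poly_Mapping.keys (u - u') \<subseteq> Poly_Mapping.keys u" by (auto simp: in_keys_iff lookup_minus)
  then show ?thesis using u by (auto simp: exponents_def)
qed

lemma binom_add_decomp:
  "(binom (u1 + u') (v' + v1) :: 'k::field mpoly) = monom u1 * binom u' v' + monom v' * binom u1 v1"
  unfolding binom_def by (simp add: algebra_simps monom_mult add.commute)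

text \<open>The pair \<open>(0, 0)\<close> is excluded so that dividing by a dominated pair lowers the degree.\<close>

definition fibre_pairs :: "nat \<Rightarrow> nat \<Rightarrow> (nat \<Rightarrow> nat \<Rightarrow> int) \<Rightarrow> ((nat \<Rightarrow>\<^sub>0 nat) \<times> (nat \<Rightarrow>\<^sub>0 nat)) set" where
  "fibre_pairs n m A = {(u, v). u \<in> exponents n \<and> v \<in> exponents n \<and> Adeg n m A u = Adeg n m A v \<and> (u, v) \<noteq> (0, 0)}"

lemma fibre_pairs_dickson:
  obtains F where "finite F" "F \<subseteq> fibre_pairs n m A"
    "\<forall>(u, v)\<in>fibre_pairs n m A. \<exists>(u', v')\<in>F. exp_le u' u \<and> exp_le v' v"
proof -
  define enc where "enc p c = (if c < n then Poly_Mapping.lookup (fst p) c else Poly_Mapping.lookup (snd p) (c - n))"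
    for p :: "(nat \<Rightarrow>\<^sub>0 nat) \<times> (nat \<Rightarrow>\<^sub>0 nat)" and c
  obtain F where F: "finite F" "F \<subseteq> fibre_pairs n m A"
    "\<forall>x\<in>fibre_pairs n m A. \<exists>y\<in>F. \<forall>c<n+n. enc y c \<le> enc x c"
    using dickson_basis[where S="fibre_pairs n m A" and h=enc and N="n+n"] by blast
  have dom: "exp_le u' u \<and> exp_le v' v"
    if "(u', v') \<in> fibre_pairs n m A" and le: "\<forall>c<n+n. enc (u', v') c \<le> enc (u, v) c" for u v u' v'
  proof -
    have u': "u' \<in> exponents n" and v': "v' \<in> exponents n" using that(1) by (auto simp: fibre_pairs_def)
    have "Poly_Mapping.lookup u' i \<le> Poly_Mapping.lookup u i" for i
      using le[rule_format, of i] lookup_exponents_beyond[OF u', of i] by (cases "i < n") (auto simp: enc_def)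
    moreover have "Poly_Mapping.lookup v' i \<le> Poly_Mapping.lookup v i" for i
      using le[rule_format, of "n + i"] lookup_exponents_beyond[OF v', of i] by (cases "i < n") (auto simp: enc_def)
    ultimately show ?thesis unfolding exp_le_def by blast
  qed
  have "\<forall>(u, v)\<in>fibre_pairs n m A. \<exists>(u', v')\<in>F. exp_le u' u \<and> exp_le v' v"
  proof clarify
    fix u v assume "(u, v) \<in> fibre_pairs n m A"
    then obtain u' v' where "(u', v') \<in> F" "\<forall>c<n+n. enc (u', v') c \<le> enc (u, v) c"
      using F(3) by fastforce
    then show "\<exists>(u', v')\<in>F. exp_le u' u \<and> exp_le v' v" using dom F(2) by blast
  qed
  then show ?thesis by (rule that[OF F(1,2)])
qed

lemma binom_in_gen_if_fibre_pairs_dominated: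
  assumes F: "F \<subseteq> fibre_pairs n m A"
    and dom: "\<forall>(u, v)\<in>fibre_pairs n m A. \<exists>(u', v')\<in>F. exp_le u' u \<and> exp_le v' v"
    and "u \<in> exponents n" "v \<in> exponents n" "Adeg n m A u = Adeg n m A v"
  shows "(binom u v :: 'k::field mpoly) \<in> poly_ideal_gen n ((\<lambda>(u, v). binom u v) ` F)"
  using assms(3-)
proof (induction "monom_deg u + monom_deg v" arbitrary: u v rule: less_induct)
  case less
  let ?G = "(\<lambda>(u, v). binom u v :: 'k mpoly) ` F"
  show ?case
  proof (cases "(u, v) \<in> fibre_pairs n m A")
    case False
    then show ?thesis using less.prems by (simp add: fibre_pairs_def binom_def)
  next
    case True
    then obtain u' v' where uv': "(u', v') \<in> F" "exp_le u' u" "exp_le v' v" using dom by blast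
    then have u'E: "u' \<in> exponents n" and v'E: "v' \<in> exponents n" and A': "Adeg n m A u' = Adeg n m A v'"
      and nz: "(u', v') \<noteq> (0, 0)" using F by (auto simp: fibre_pairs_def)
    define u1 where "u1 = u - u'"
    define v1 where "v1 = v - v'"
    have uu: "u = u1 + u'" and vv: "v = v' + v1"
      unfolding u1_def v1_def using exp_le_decomp[OF uv'(2)] exp_le_decomp[OF uv'(3)] by (simp_all add: add.commute)
    have u1E: "u1 \<in> exponents n" and v1E: "v1 \<in> exponents n"
      unfolding u1_def v1_def using less.prems(1,2) by (simp_all add: exponents_diff)
    have A1: "Adeg n m A u1 = Adeg n m A v1"
      using less.prems(3) A' Adeg_add[of n m A u1 u'] Adeg_add[of n m A v' v1]
      unfolding uu[symmetric] vv[symmetric] by (auto simp: fun_eq_iff)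
    have "0 < monom_deg u' + monom_deg v'" using nz monom_deg_eq_0_iff by auto
    then have "monom_deg u1 + monom_deg v1 < monom_deg u + monom_deg v"
      using monom_deg_add[of u1 u'] monom_deg_add[of v' v1] uu vv by simp
    then have IH: "binom u1 v1 \<in> poly_ideal_gen n ?G" using less.hyps u1E v1E A1 by blast
    have "binom u' v' \<in> poly_ideal_gen n ?G" using uv'(1) by (auto intro: gen_base)
    then show ?thesis unfolding uu vv binom_add_decomp
      by (rule gen_add[OF gen_mult gen_mult]) (use IH u1E v'E in auto)
  qed
qed

lemma toric_ideal_binomial_basis:
  "\<exists>G. finite G \<and> G \<subseteq> toric_ideal TYPE('k::field) n m A \<and> (\<forall>g\<in>G. is_binomial g)
      \<and> toric_ideal TYPE('k) n m A \<subseteq> poly_ideal_gen n G"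
proof -
  obtain F where F: "finite F" "F \<subseteq> fibre_pairs n m A"
    "\<forall>(u, v)\<in>fibre_pairs n m A. \<exists>(u', v')\<in>F. exp_le u' u \<and> exp_le v' v"
    by (rule fibre_pairs_dickson)
  define G :: "'k mpoly set" where "G = (\<lambda>(u, v). binom u v) ` F"
  have "finite G" using F(1) by (simp add: G_def)
  moreover have "G \<subseteq> toric_ideal TYPE('k) n m A"
    unfolding G_def using F(2) by (auto simp: fibre_pairs_def intro!: binom_in_toric_ideal)
  moreover have "\<forall>g\<in>G. is_binomial g" by (auto simp: G_def is_binomial_binom)
  moreover have "G \<subseteq> polyring n"
    unfolding G_def using F(2) by (auto simp: fibre_pairs_def)
  then have "toric_ideal TYPE('k) n m A \<subseteq> poly_ideal_gen n G"
    unfolding G_def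
    by (rule toric_ideal_subset_ideal[OF gen_ideal binom_in_gen_if_fibre_pairs_dominated[OF F(2,3)]])
  ultimately show ?thesis by blast
qed

lemma single_add_single_eq_0_iff:
  "Poly_Mapping.single a c + Poly_Mapping.single b e = (0 :: 'a \<Rightarrow>\<^sub>0 'b::ab_group_add)
     \<longleftrightarrow> (c = 0 \<and> e = 0) \<or> (a = b \<and> e = - c)"
proof
  assume H: "Poly_Mapping.single a c + Poly_Mapping.single b e = 0"
  have "c + (if a = b then e else 0) = 0" "(if a = b then c else 0) + e = 0"
    using arg_cong[OF H, of "\<lambda>p. Poly_Mapping.lookup p a"] arg_cong[OF H, of "\<lambda>p. Poly_Mapping.lookup p b"]
    by (auto simp: lookup_add lookup_single when_def)
  then show "(c = 0 \<and> e = 0) \<or> (a = b \<and> e = - c)" by (cases "a = b") (auto simp: add_eq_0_iff)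
qed (auto simp: single_uminus simp flip: single_add)

lemma binomial_in_toric_ideal_cases:
  assumes bB: "is_binomial B" and BT: "B \<in> toric_ideal TYPE('k::field) n m A"
  shows "B = 0 \<or> (\<exists>u v c. u \<in> exponents n \<and> v \<in> exponents n \<and> u \<noteq> v \<and> c \<noteq> 0 \<and> Adeg n m A u = Adeg n m A v
           \<and> B = Poly_Mapping.single 0 (c::'k) * binom u v)"
proof -
  obtain u v c e where B: "B = Poly_Mapping.single u (c::'k) + Poly_Mapping.single v e"
    using bB unfolding is_binomial_def by blast
  have "Poly_Mapping.single (Adeg_pm n m A u) c + Poly_Mapping.single (Adeg_pm n m A v) e = 0"
    using BT B by (simp add: toric_ideal_iff toric_hom_add toric_hom_single)
  then consider (zero) "c = 0" "e = 0" | (fibre) "Adeg_pm n m A u = Adeg_pm n m A v" "e = - c"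
    unfolding single_add_single_eq_0_iff by blast
  then show ?thesis
  proof cases
    case zero
    then show ?thesis using B by simp
  next
    case fibre
    show ?thesis
    proof (cases "u = v \<or> c = 0")
      case True
      then show ?thesis using B fibre by (auto simp: single_uminus simp flip: single_add)
    next
      case False
      have "u \<in> Poly_Mapping.keys B" "v \<in> Poly_Mapping.keys B"
        using B False fibre(2) by (auto simp: in_keys_iff lookup_add lookup_single_not_eq)
      then have "u \<in> exponents n" "v \<in> exponents n"
        using keys_polyring BT by (auto simp: toric_ideal_iff)
      moreover have "B = Poly_Mapping.single 0 c * binom u v"
        using B fibre(2) by (simp add: single_mult_binom single_uminus)
      ultimately show ?thesis using False fibre(1) by (auto simp: Adeg_pm_eq_Adeg_pm)
    qed
  qed
qed

abbreviation line_toric_ideal :: "'k::field itself \<Rightarrow> nat \<Rightarrow> (nat \<Rightarrow> int) \<Rightarrow> 'k mpoly set" where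
  "line_toric_ideal K n d \<equiv> toric_ideal K n (n * n) (line_config n d)"

lemma binom_in_line_toric_ideal:
  assumes u: "u \<in> exponents n" and v: "v \<in> exponents n"
  shows "binom u v \<in> line_toric_ideal TYPE('k::field) n (exp_diff u v)"
proof (rule binom_in_toric_ideal[OF u v])
  have "\<forall>i. n \<le> i \<longrightarrow> exp_diff u v i = 0" using exp_diff_beyond[OF u v] by blast
  then show "Adeg n (n * n) (line_config n (exp_diff u v)) u = Adeg n (n * n) (line_config n (exp_diff u v)) v"
    using Adeg_line_config_eq_iff[OF u v] parallel_refl by blast
qed

lemma line_toric_ideal_subset_toric_ideal:
  assumes u: "u \<in> exponents n" and v: "v \<in> exponents n" and uv: "u \<noteq> v"
    and A: "Adeg n m A u = Adeg n m A v"
  shows "line_toric_ideal TYPE('k::field) n (exp_diff u v) \<subseteq> toric_ideal TYPE('k) n m A"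
proof (rule toric_ideal_mono_fibres, intro ballI impI)
  let ?d = "exp_diff u v"
  have ds: "\<forall>i. n \<le> i \<longrightarrow> ?d i = 0" using exp_diff_beyond[OF u v] by blast
  have Ld: "kernel_vec n m A ?d" using Adeg_eq_iff_kernel_vec[OF u v] A by simp
  obtain i0 where i0: "?d i0 \<noteq> 0" using exp_diff_nonzero[OF uv] by blast
  fix u' v' assume u': "u' \<in> exponents n" and v': "v' \<in> exponents n"
    and "Adeg n (n * n) (line_config n ?d) u' = Adeg n (n * n) (line_config n ?d) v'"
  then have "parallel (exp_diff u' v') ?d" using Adeg_line_config_eq_iff[OF u' v' ds] by simp
  then have "kernel_vec n m A (exp_diff u' v')"
    using kernel_vec_if_parallel[OF Ld i0] exp_diff_beyond[OF u' v'] by blast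
  then show "Adeg n m A u' = Adeg n m A v'" using Adeg_eq_iff_kernel_vec[OF u' v'] by simp
qed

lemma toric_ideal_principal_if_subset_line_toric_ideal:
  assumes u: "u \<in> exponents n" and v: "v \<in> exponents n" and uv: "u \<noteq> v"
    and A: "Adeg n m A u = Adeg n m A v"
    and sub: "toric_ideal TYPE('k::field) n m A \<subseteq> line_toric_ideal TYPE('k) n (exp_diff u v)"
  shows "\<exists>a\<in>exponents n. \<exists>b\<in>exponents n. a \<noteq> b \<and> Adeg n m A a = Adeg n m A b \<and>
     toric_ideal TYPE('k) n m A \<subseteq> poly_ideal_gen n {binom a b}"
proof (rule toric_ideal_principal_if_parallel[OF u v uv A], intro ballI impI)
  fix u' v' assume u': "u' \<in> exponents n" and v': "v' \<in> exponents n" and A': "Adeg n m A u' = Adeg n m A v'"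
  have "(binom u' v' :: 'k mpoly) \<in> line_toric_ideal TYPE('k) n (exp_diff u v)"
    using binom_in_toric_ideal[OF u' v' A'] sub by blast
  then have "Adeg n (n * n) (line_config n (exp_diff u v)) u' = Adeg n (n * n) (line_config n (exp_diff u v)) v'"
    by (rule Adeg_eq_if_binom_in_toric_ideal)
  moreover have "\<forall>i. n \<le> i \<longrightarrow> exp_diff u v i = 0" using exp_diff_beyond[OF u v] by blast
  ultimately show "parallel (exp_diff u' v') (exp_diff u v)" using Adeg_line_config_eq_iff[OF u' v'] by blast
qed

lemma nonzero_binomial_in_line_toric_ideal:
  assumes "is_binomial B" and "B \<in> toric_ideal TYPE('k::field) n m A" and "B \<noteq> 0"
  obtains u v where "u \<in> exponents n" "v \<in> exponents n" "u \<noteq> v" "Adeg n m A u = Adeg n m A v"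
    "B \<in> line_toric_ideal TYPE('k) n (exp_diff u v)"
proof -
  obtain u v c where uv: "u \<in> exponents n" "v \<in> exponents n" "u \<noteq> v" "Adeg n m A u = Adeg n m A v"
    and B: "B = Poly_Mapping.single 0 (c::'k) * binom u v"
    using binomial_in_toric_ideal_cases[OF assms(1,2)] assms(3) by blast
  have "B \<in> line_toric_ideal TYPE('k) n (exp_diff u v)"
    unfolding B
    by (rule ideal_mult_mem[OF is_ideal_toric_ideal polyring_single[OF zero_in_exponents] binom_in_line_toric_ideal[OF uv(1,2)]])
  then show ?thesis by (rule that[OF uv])
qed

lemma two_le_prime_height_toric_ideal:
  assumes u0: "u0 \<in> exponents n" and v0: "v0 \<in> exponents n" and uv0: "u0 \<noteq> v0"
    and A0: "Adeg n m A u0 = Adeg n m A v0"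
    and u1: "u1 \<in> exponents n" and v1: "v1 \<in> exponents n" and A1: "Adeg n m A u1 = Adeg n m A v1"
    and nonpar: "\<not> parallel (exp_diff u1 v1) (exp_diff u0 v0)"
  shows "2 \<le> prime_height n (toric_ideal TYPE('k::field) n m A)"
proof -
  let ?T = "line_toric_ideal TYPE('k) n (exp_diff u0 v0)"
  have "{0} \<subset> ?T"
    using binom_in_line_toric_ideal[OF u0 v0, where 'k='k] binom_nonzero[OF uv0, where 'k='k]
      zero_in_prime_ideal[OF is_prime_toric_ideal]
    by blast
  moreover have "(binom u1 v1 :: 'k mpoly) \<notin> ?T"
  proof
    assume "binom u1 v1 \<in> ?T"
    then have "Adeg n (n * n) (line_config n (exp_diff u0 v0)) u1 = Adeg n (n * n) (line_config n (exp_diff u0 v0)) v1"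
      by (rule Adeg_eq_if_binom_in_toric_ideal)
    moreover have "\<forall>i. n \<le> i \<longrightarrow> exp_diff u0 v0 i = 0" using exp_diff_beyond[OF u0 v0] by blast
    ultimately show False using Adeg_line_config_eq_iff[OF u1 v1] nonpar by blast
  qed
  then have "?T \<subset> toric_ideal TYPE('k) n m A"
    using line_toric_ideal_subset_toric_ideal[OF u0 v0 uv0 A0] binom_in_toric_ideal[OF u1 v1 A1, where 'k='k]
    by blast
  ultimately show ?thesis
    by (rule prime_chain_2_le_prime_height[OF is_prime_ideal_zero is_prime_toric_ideal is_prime_toric_ideal])
qed

lemma toric_ideal_height_le_1_cases:
  assumes ht: "prime_height n (toric_ideal TYPE('k::field) n m A) \<le> 1"
  shows "toric_ideal TYPE('k) n m A \<subseteq> {0} \<or>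
    (\<exists>a\<in>exponents n. \<exists>b\<in>exponents n. a \<noteq> b \<and> binom a b \<in> toric_ideal TYPE('k) n m A
       \<and> toric_ideal TYPE('k) n m A \<subseteq> poly_ideal_gen n {binom a b})"
proof (cases "\<exists>u\<in>exponents n. \<exists>v\<in>exponents n. u \<noteq> v \<and> Adeg n m A u = Adeg n m A v")
  case False
  have "is_ideal n {0 :: 'k mpoly}" using is_prime_ideal_zero by (simp add: is_prime_ideal_def)
  then have "toric_ideal TYPE('k) n m A \<subseteq> {0}"
    by (rule toric_ideal_subset_ideal) (use False in \<open>auto simp: binom_def\<close>)
  then show ?thesis ..
next
  case True
  then obtain u0 v0 where u0: "u0 \<in> exponents n" and v0: "v0 \<in> exponents n" and uv0: "u0 \<noteq> v0"
    and A0: "Adeg n m A u0 = Adeg n m A v0" by blast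
  have "\<not> (2::enat) \<le> 1" by simp
  then have "\<forall>u\<in>exponents n. \<forall>v\<in>exponents n. Adeg n m A u = Adeg n m A v \<longrightarrow> parallel (exp_diff u v) (exp_diff u0 v0)"
    using two_le_prime_height_toric_ideal[OF u0 v0 uv0 A0, where 'k='k] ht order_trans by blast
  then obtain a b where "a \<in> exponents n" "b \<in> exponents n" "a \<noteq> b" "Adeg n m A a = Adeg n m A b"
    "toric_ideal TYPE('k) n m A \<subseteq> poly_ideal_gen n {binom a b}"
    using toric_ideal_principal_if_parallel[OF u0 v0 uv0 A0] by blast
  then show ?thesis using binom_in_toric_ideal[of a n b m A] by blast
qed

section \<open>Toric ideals of height two\<close>

lemma height2_toric_ideal_not_subset_line_toric_ideal:
  assumes ht: "prime_height n (toric_ideal TYPE('k::field) n m A) = 2"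
    and u: "u \<in> exponents n" and v: "v \<in> exponents n" and uv: "u \<noteq> v" and A: "Adeg n m A u = Adeg n m A v"
  shows "\<not> toric_ideal TYPE('k) n m A \<subseteq> line_toric_ideal TYPE('k) n (exp_diff u v)"
proof
  assume "toric_ideal TYPE('k) n m A \<subseteq> line_toric_ideal TYPE('k) n (exp_diff u v)"
  then obtain a b where "a \<in> exponents n" "b \<in> exponents n" "a \<noteq> b"
    "toric_ideal TYPE('k) n m A \<subseteq> poly_ideal_gen n {binom a b}"
    using toric_ideal_principal_if_subset_line_toric_ideal[OF u v uv A] by blast
  then have "prime_height n (toric_ideal TYPE('k) n m A) \<le> 1"
    using prime_height_le_1_if_subset_principal polyring_binom total_deg_binom_ge_1 by blast
  then show False using ht by simp
qed

lemma height2_toric_ideal_not_subset_rad_binomial: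
  assumes ht: "prime_height n (toric_ideal TYPE('k::field) n m A) = 2"
    and B: "is_binomial B" "B \<in> toric_ideal TYPE('k) n m A"
  shows "\<not> toric_ideal TYPE('k) n m A \<subseteq> poly_rad n (poly_ideal_gen n {B})"
proof
  assume sub: "toric_ideal TYPE('k) n m A \<subseteq> poly_rad n (poly_ideal_gen n {B})"
  show False
  proof (cases "B = 0")
    case True
    then have "toric_ideal TYPE('k) n m A = {0}"
      using sub rad_subset_zero[OF gen_subset_zero[of "{B}" n]] zero_in_prime_ideal[OF is_prime_toric_ideal] by blast
    then show False using ht prime_height_zero[of n, where 'k='k] by simp
  next
    case False
    then obtain u v where uv: "u \<in> exponents n" "v \<in> exponents n" "u \<noteq> v" "Adeg n m A u = Adeg n m A v"
      and BT: "B \<in> line_toric_ideal TYPE('k) n (exp_diff u v)"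
      using nonzero_binomial_in_line_toric_ideal[OF B] by blast
    let ?T = "line_toric_ideal TYPE('k) n (exp_diff u v)"
    have "poly_ideal_gen n {B} \<subseteq> ?T" using BT by (intro gen_least is_ideal_toric_ideal) simp
    then have "poly_rad n (poly_ideal_gen n {B}) \<subseteq> ?T" by (rule rad_subset_prime[OF is_prime_toric_ideal])
    then show False using sub height2_toric_ideal_not_subset_line_toric_ideal[OF ht uv] by blast
  qed
qed

lemma height2_toric_ideal_proper_toric_subideal:
  assumes ht: "prime_height n (toric_ideal TYPE('k::field) n m A) = 2"
    and B: "is_binomial B" "B \<in> toric_ideal TYPE('k) n m A" "B \<noteq> 0"
  obtains J where "is_toric_ideal n J" "B \<in> J" "J \<subseteq> toric_ideal TYPE('k) n m A" "J \<noteq> toric_ideal TYPE('k) n m A"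
proof -
  obtain u v where uv: "u \<in> exponents n" "v \<in> exponents n" "u \<noteq> v" "Adeg n m A u = Adeg n m A v"
    and BT: "B \<in> line_toric_ideal TYPE('k) n (exp_diff u v)"
    using nonzero_binomial_in_line_toric_ideal[OF B] by blast
  show ?thesis
  proof (rule that)
    show "is_toric_ideal n (line_toric_ideal TYPE('k) n (exp_diff u v))"
      unfolding is_toric_ideal_def by blast
    show "line_toric_ideal TYPE('k) n (exp_diff u v) \<subseteq> toric_ideal TYPE('k) n m A"
      by (rule line_toric_ideal_subset_toric_ideal[OF uv])
    then show "line_toric_ideal TYPE('k) n (exp_diff u v) \<noteq> toric_ideal TYPE('k) n m A"
      using height2_toric_ideal_not_subset_line_toric_ideal[OF ht uv] by blast
  qed (rule BT)
qed

lemma height2_splitting_summand_principal: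
  assumes ht: "prime_height n (toric_ideal TYPE('k::field) n m A) = 2"
    and J: "J \<subset> toric_ideal TYPE('k) n m A" "J = toric_ideal TYPE('k) n m' A'"
    and J': "is_prime_ideal n J'" "J' \<subset> toric_ideal TYPE('k) n m A"
    and split: "toric_ideal TYPE('k) n m A = poly_rad n (poly_ideal_gen n (J \<union> J'))"
  shows "\<exists>a\<in>exponents n. \<exists>b\<in>exponents n. a \<noteq> b \<and> binom a b \<in> J \<and> J \<subseteq> poly_ideal_gen n {binom a b}"
proof -
  have "prime_height n (toric_ideal TYPE('k) n m A) \<le> enat (Suc 1)" using ht by (simp add: numeral_eq_enat)
  then have "prime_height n J \<le> 1"
    using prime_height_le_if_psubset[OF is_prime_toric_ideal J(1)] by (simp add: one_enat_def)
  moreover have "\<not> J \<subseteq> {0}"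
  proof
    assume "J \<subseteq> {0}"
    then have "poly_ideal_gen n (J \<union> J') \<subseteq> J'"
      using J'(1) zero_in_prime_ideal[OF J'(1)] by (intro gen_least) (auto simp: is_prime_ideal_def)
    then have "toric_ideal TYPE('k) n m A \<subseteq> J'" using split rad_subset_prime[OF J'(1)] by blast
    then show False using J'(2) by blast
  qed
  ultimately show ?thesis using toric_ideal_height_le_1_cases[of n m' A'] J(2) by blast
qed

definition rad_gen_by_binomials :: "nat \<Rightarrow> 'k::field mpoly set \<Rightarrow> nat \<Rightarrow> bool" where
  "rad_gen_by_binomials n I t \<longleftrightarrow> (\<exists>B :: nat \<Rightarrow> 'k mpoly. (\<forall>i<t. is_binomial (B i) \<and> B i \<in> I)
       \<and> I = poly_rad n (poly_ideal_gen n (B ` {..<t})))"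

lemma bar_eq_Least_rad_gen_by_binomials: "bar n I = (LEAST t. rad_gen_by_binomials n I t)"
  unfolding bar_def rad_gen_by_binomials_def ..

lemma toric_ideal_rad_gen_by_binomials: "\<exists>t. rad_gen_by_binomials n (toric_ideal TYPE('k::field) n m A) t"
proof -
  let ?I = "toric_ideal TYPE('k) n m A"
  obtain G where G: "finite G" "G \<subseteq> ?I" "\<forall>g\<in>G. is_binomial g" "?I \<subseteq> poly_ideal_gen n G"
    using toric_ideal_binomial_basis[of n m A, where 'k='k] by blast
  obtain xs where xs: "set xs = G" using finite_list[OF G(1)] by blast
  have im: "(\<lambda>i. xs ! i) ` {..<length xs} = G" using xs by (auto simp: set_conv_nth)
  have "poly_rad n (poly_ideal_gen n G) \<subseteq> ?I"
    by (rule rad_subset_prime[OF is_prime_toric_ideal gen_least[OF is_ideal_toric_ideal G(2)]])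
  moreover have "G \<subseteq> polyring n" using G(2) toric_ideal_subset_polyring by blast
  then have "?I \<subseteq> poly_rad n (poly_ideal_gen n G)"
    using G(4) subset_rad[OF gen_subset_polyring] by blast
  ultimately have "rad_gen_by_binomials n ?I (length xs)"
    unfolding rad_gen_by_binomials_def using G(2,3) xs im by (intro exI[of _ "\<lambda>i. xs ! i"]) auto
  then show ?thesis ..
qed

lemma height2_toric_ideal_not_rad_gen_lt_2:
  assumes ht: "prime_height n (toric_ideal TYPE('k::field) n m A) = 2" and t: "t < 2"
  shows "\<not> rad_gen_by_binomials n (toric_ideal TYPE('k) n m A) t"
proof
  let ?I = "toric_ideal TYPE('k) n m A"
  assume "rad_gen_by_binomials n ?I t"
  then obtain B where B: "\<forall>i<t. is_binomial (B i) \<and> B i \<in> ?I"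
    and rB: "?I = poly_rad n (poly_ideal_gen n (B ` {..<t}))"
    unfolding rad_gen_by_binomials_def by blast
  define B0 where "B0 = (if t = 0 then 0 else B 0)"
  have B0: "is_binomial B0" "B0 \<in> ?I"
    using B is_binomial_0 zero_in_prime_ideal[OF is_prime_toric_ideal] by (auto simp: B0_def)
  have "B ` {..<t} \<subseteq> {B0}" using t by (cases t) (auto simp: B0_def)
  then have "?I \<subseteq> poly_rad n (poly_ideal_gen n {B0})" using rB rad_mono[OF gen_mono] by blast
  then show False using height2_toric_ideal_not_subset_rad_binomial[OF ht B0] by blast
qed

lemma height2_bar_eq_2_iff:
  assumes ht: "prime_height n (toric_ideal TYPE('k::field) n m A) = 2"
  shows "bar n (toric_ideal TYPE('k) n m A) = 2 \<longleftrightarrow> rad_gen_by_binomials n (toric_ideal TYPE('k) n m A) 2"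
  unfolding bar_eq_Least_rad_gen_by_binomials
proof
  let ?P = "rad_gen_by_binomials n (toric_ideal TYPE('k) n m A)"
  assume "(LEAST t. ?P t) = 2"
  moreover have "?P (LEAST t. ?P t)" by (rule LeastI_ex[OF toric_ideal_rad_gen_by_binomials])
  ultimately show "?P 2" by simp
next
  let ?P = "rad_gen_by_binomials n (toric_ideal TYPE('k) n m A)"
  have lower: "2 \<le> t" if "?P t" for t
    using height2_toric_ideal_not_rad_gen_lt_2[OF ht, of t] that by (cases "t < 2") auto
  assume "?P 2"
  then show "(LEAST t. ?P t) = 2" by (rule Least_equality[OF _ lower])
qed

lemma height2_radical_splittable_imp_rad_gen_2:
  assumes ht: "prime_height n (toric_ideal TYPE('k::field) n m A) = 2"
    and "radical_splittable n (toric_ideal TYPE('k) n m A)"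
  shows "rad_gen_by_binomials n (toric_ideal TYPE('k) n m A) 2"
proof -
  let ?I = "toric_ideal TYPE('k) n m A"
  obtain I1 I2 m1 A1 m2 A2 where I1: "I1 = toric_ideal TYPE('k) n m1 A1" and I2: "I2 = toric_ideal TYPE('k) n m2 A2"
    and rI: "?I = poly_rad n (poly_ideal_gen n (I1 \<union> I2))" and "I1 \<noteq> ?I" "I2 \<noteq> ?I"
    using assms(2) unfolding radical_splittable_def is_toric_ideal_def by blast
  moreover have "I1 \<union> I2 \<subseteq> ?I"
    using rI subset_rad_gen[of "I1 \<union> I2" n] toric_ideal_subset_polyring unfolding I1 I2 by blast
  ultimately have psub: "I1 \<subset> ?I" "I2 \<subset> ?I" by auto
  have I1p: "is_prime_ideal n I1" and I2p: "is_prime_ideal n I2" unfolding I1 I2 by (rule is_prime_toric_ideal)+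
  have rI': "?I = poly_rad n (poly_ideal_gen n (I2 \<union> I1))" using rI by (simp add: Un_commute)
  obtain a1 b1 where
    ab1: "a1 \<in> exponents n" "b1 \<in> exponents n" "binom a1 b1 \<in> I1" "I1 \<subseteq> poly_ideal_gen n {binom a1 b1}"
    using height2_splitting_summand_principal[OF ht psub(1) I1 I2p psub(2) rI] by blast
  obtain a2 b2 where
    ab2: "a2 \<in> exponents n" "b2 \<in> exponents n" "binom a2 b2 \<in> I2" "I2 \<subseteq> poly_ideal_gen n {binom a2 b2}"
    using height2_splitting_summand_principal[OF ht psub(2) I2 I1p psub(1) rI'] by blast
  define B where "B i = (if i = 0 then binom a1 b1 else binom a2 b2 :: 'k mpoly)" for i :: nat
  have BB: "B ` {..<2} = {binom a1 b1, binom a2 b2}" by (auto simp: B_def numeral_2_eq_2 less_Suc_eq)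
  have "poly_ideal_gen n (I1 \<union> I2) \<subseteq> poly_ideal_gen n {binom a1 b1, binom a2 b2}"
  proof (rule gen_sub_gen)
    show "I1 \<union> I2 \<subseteq> poly_ideal_gen n {binom a1 b1, binom a2 b2}"
      using ab1(4) ab2(4) gen_mono[of "{binom a1 b1}" "{binom a1 b1, binom a2 b2}" n]
        gen_mono[of "{binom a2 b2}" "{binom a1 b1, binom a2 b2}" n] by blast
  qed (use ab1 ab2 in simp)
  moreover have "poly_ideal_gen n {binom a1 b1, binom a2 b2} \<subseteq> poly_ideal_gen n (I1 \<union> I2)"
    by (rule gen_mono) (use ab1(3) ab2(3) in auto)
  ultimately show ?thesis
    unfolding rad_gen_by_binomials_def using rI psub ab1(3) ab2(3) BB
    by (intro exI[of _ B]) (auto simp: B_def is_binomial_binom)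
qed

lemma height2_rad_gen_2_imp_radical_splittable:
  assumes ht: "prime_height n (toric_ideal TYPE('k::field) n m A) = 2"
    and "rad_gen_by_binomials n (toric_ideal TYPE('k) n m A) 2"
  shows "radical_splittable n (toric_ideal TYPE('k) n m A)"
proof -
  let ?I = "toric_ideal TYPE('k) n m A"
  obtain B :: "nat \<Rightarrow> 'k mpoly" where B: "\<forall>i<2. is_binomial (B i) \<and> B i \<in> ?I"
    and rB: "?I = poly_rad n (poly_ideal_gen n (B ` {..<2}))"
    using assms(2) unfolding rad_gen_by_binomials_def by blast
  have "B ` {..<2} = {B 0, B 1}" by (auto simp: numeral_2_eq_2 less_Suc_eq)
  then have rB: "?I = poly_rad n (poly_ideal_gen n {B 0, B 1})" using rB by simp
  have nz: "B j \<noteq> 0" if j: "j < 2" for j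
  proof
    assume "B j = 0"
    then have "{B 0, B 1} \<subseteq> poly_ideal_gen n {B (1 - j)}" using j by (auto simp: less_2_cases_iff intro: gen_base)
    moreover have "{B (1 - j)} \<subseteq> polyring n"
      using B[rule_format, of "1 - j"] toric_ideal_subset_polyring[of n m A, where 'k='k] by auto
    ultimately have "poly_ideal_gen n {B 0, B 1} \<subseteq> poly_ideal_gen n {B (1 - j)}" by (rule gen_sub_gen)
    then have "?I \<subseteq> poly_rad n (poly_ideal_gen n {B (1 - j)})" using rB rad_mono by blast
    then show False using height2_toric_ideal_not_subset_rad_binomial[OF ht] B[rule_format, of "1 - j"] by simp
  qed
  have B0: "is_binomial (B 0)" "B 0 \<in> ?I" "B 0 \<noteq> 0" and B1: "is_binomial (B 1)" "B 1 \<in> ?I" "B 1 \<noteq> 0"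
    using B nz by simp_all
  obtain J1 where J1: "is_toric_ideal n J1" "B 0 \<in> J1" "J1 \<subseteq> ?I" "J1 \<noteq> ?I"
    by (rule height2_toric_ideal_proper_toric_subideal[OF ht B0])
  obtain J2 where J2: "is_toric_ideal n J2" "B 1 \<in> J2" "J2 \<subseteq> ?I" "J2 \<noteq> ?I"
    by (rule height2_toric_ideal_proper_toric_subideal[OF ht B1])
  have "J1 \<union> J2 \<subseteq> polyring n" using J1(3) J2(3) toric_ideal_subset_polyring[of n m A, where 'k='k] by blast
  have "?I = poly_rad n (poly_ideal_gen n (J1 \<union> J2))"
  proof
    have "poly_ideal_gen n {B 0, B 1} \<subseteq> poly_ideal_gen n (J1 \<union> J2)"
      by (rule gen_sub_gen[OF _ \<open>J1 \<union> J2 \<subseteq> polyring n\<close>]) (use J1(2) J2(2) in \<open>auto intro: gen_base\<close>)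
    then show "?I \<subseteq> poly_rad n (poly_ideal_gen n (J1 \<union> J2))" using rB rad_mono by blast
    show "poly_rad n (poly_ideal_gen n (J1 \<union> J2)) \<subseteq> ?I"
      by (rule rad_subset_prime[OF is_prime_toric_ideal gen_least[OF is_ideal_toric_ideal]]) (use J1 J2 in blast)
  qed
  then show ?thesis unfolding radical_splittable_def using J1 J2 by blast
qed

theorem corollary4p2:
  fixes n m :: nat and A :: "nat \<Rightarrow> nat \<Rightarrow> int"
  assumes "pointed_config n m A"
    and "ideal_height n (toric_ideal TYPE('k::field) n m A) = 2"
  shows "radical_splittable n (toric_ideal TYPE('k) n m A)
     \<longleftrightarrow> stci_binomials n (toric_ideal TYPE('k) n m A)"
proof -
  let ?I = "toric_ideal TYPE('k) n m A"
  have ht: "prime_height n ?I = 2"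
    using assms(2) ideal_height_prime[OF is_prime_toric_ideal[of n m A, where 'k='k]] by simp
  have "stci_binomials n ?I \<longleftrightarrow> bar n ?I = 2"
    using assms(2) by (simp add: stci_binomials_def numeral_eq_enat)
  also have "\<dots> \<longleftrightarrow> rad_gen_by_binomials n ?I 2" by (rule height2_bar_eq_2_iff[OF ht])
  also have "\<dots> \<longleftrightarrow> radical_splittable n ?I"
    using height2_radical_splittable_imp_rad_gen_2[OF ht] height2_rad_gen_2_imp_radical_splittable[OF ht] by blast
  finally show ?thesis ..
qed

end
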